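(* Let $C$ be a conformal algebra, $1\le s\le n-1$, $A\in H^{\otimes s}\otimes_H C$, $B\in H^{\otimes(n-s)}\otimes_H C$, $\bar x\in\Bbbk[t]^{\otimes(s-1)}$, $\bar z\in\Bbbk[t]^{\otimes(n-s-1)}$, $y\in\Bbbk[t]$. Then, with $A*B$ the expanded pseudoproduct, $$P^{\bar x\otimes y\otimes\bar z}(A*B)=P^{\,y\,\Pi\bar x_{(1)}}\big(P^{\bar x_{(2)}}(A)*P^{\bar z}(B)\big),$$ where the right-hand side is summed over the Sweedler components of the componentwise coproduct $\bar x_{(1)}\otimes\bar x_{(2)}$ of $\bar x$, and $P^{\bar x_{(2)}}(A),P^{\bar z}(B)\in C$.
   Context: $\Bbbk$ is a field of characteristic $0$, $H=\Bbbk[D]$ with Hopf structure $\Delta(D)=D\otimes1+1\otimes D$, $\varepsilon(D)=0$, $S(D)=-D$; iterated coproduct $\Delta^{(1)}=\mathrm{id}$, $\Delta^{(k+1)}=(\mathrm{id}\otimes\Delta^{(k)})\Delta$; $H$ acts on $H^{\otimes n}$ from the right by $(f_1\otimes\cdots\otimes f_n)h=f_1h_{(1)}\otimes\cdots\otimes f_nh_{(n)}$ and $H^{\otimes n}\otimes_H M$ is taken w.r.t. this action. A conformal algebra is a unital left $H$-module $C$ with bilinear operations $a_{(n)}b$ ($n\ge0$) such that $a_{(n)}b=0$ for $n\gg0$, $(Da)_{(n)}b=-na_{(n-1)}b$, $a_{(n)}(Db)=D(a_{(n)}b)+na_{(n-1)}b$. Pseudoproduct $a*b=\sum_{s\ge0}\frac{(-D)^s}{s!}\otimes1\otimes_H(a_{(s)}b)$;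 expanded pseudoproduct: if $a*b=\sum_i f_i\otimes g_i\otimes_H c_i$ then $(F\otimes_H a)*(G\otimes_H b)=\sum_iF\Delta^{(n)}(f_i)\otimes G\Delta^{(m)}(g_i)\otimes_H c_i$ for $F\in H^{\otimes n},G\in H^{\otimes m}$. On $\Bbbk[t]$ use the coproduct $\Delta(t)=t\otimes1+1\otimes t$ (notation $x_{(1)}\otimes x_{(2)}$), antipode $S(t)=-t$, and the pairing $\langle\cdot,\cdot\rangle:\Bbbk[t]\times H\to\Bbbk$, $\langle t^k,D^m\rangle=k!\,\delta_{k,m}$ (identifying $\Bbbk[t]$ with a subalgebra of the dual algebra $H^*$). Every element of $H^{\otimes n}\otimes_H C$ can be written uniquely as $\sum (h_1\otimes\cdots\otimes h_{n-1}\otimes1)\otimes_H c$, giving an isomorphism $\theta:H^{\otimes n}\otimes_HC\to H^{\otimes(n-1)}\otimes C$, $(h_1\otimes\cdots\otimes h_{n-1}\otimes1)\otimes_Hc\mapsto h_1\otimes\cdots\otimes h_{n-1}\otimes c$. For $x_1,\dots,x_{n-1}\in\Bbbk[t]$ define $P^{x_1\otimes\cdots\otimes x_{n-1}}=(\langle S(x_1),\cdot\rangle\otimes\cdots\otimes\langle S(x_{n-1}),\cdot\rangle\otimes\mathrm{id}_C)\theta:H^{\otimes n}\otimes_HC\to C$, extended linearly to $\Bbbk[t]^{\otimes(n-1)}$; for $n=1$, $P^{\emptyset}$ is the canonical isomorphism $H\otimes_HC\cong C$. For $\bar x=x_1\otimes\cdots\otimes x_k$, $\Pi\bar x=x_1\cdots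 x_k$, and $\bar x_{(1)}\otimes\bar x_{(2)}$ denotes the componentwise coproduct $(x_{1(1)}\otimes\cdots\otimes x_{k(1)})\otimes(x_{1(2)}\otimes\cdots\otimes x_{k(2)})$. *)

theory Defs
  imports "HOL-Computational_Algebra.Polynomial"
begin

text \<open>C is a k-vector space (scalar multiplication sc) with the action of D given by the
  linear map d (so C is a unital k[D]-module); pr j a b is the j-product a_(j) b.\<close>

definition conformal_algebra ::
  "('k::field_char_0 \<Rightarrow> 'c::ab_group_add \<Rightarrow> 'c) \<Rightarrow> ('c \<Rightarrow> 'c) \<Rightarrow> (nat \<Rightarrow> 'c \<Rightarrow> 'c \<Rightarrow> 'c) \<Rightarrow> bool"
  where
  "conformal_algebra sc d pr \<longleftrightarrow>
     vector_space sc \<and> Vector_Spaces.linear sc sc d \<and>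
     (\<forall>j a. Vector_Spaces.linear sc sc (pr j a)) \<and>
     (\<forall>j b. Vector_Spaces.linear sc sc (\<lambda>a. pr j a b)) \<and>
     (\<forall>a b. \<exists>N. \<forall>j\<ge>N. pr j a b = 0) \<and>
     (\<forall>j a b. pr j (d a) b = - sc (of_nat j) (pr (j - 1) a b)) \<and>
     (\<forall>j a b. pr j a (d b) = d (pr j a b) + sc (of_nat j) (pr (j - 1) a b))"

text \<open>An element of H^{\<otimes>n} \<otimes> V (resp. k[t]^{\<otimes>n}) is encoded by its coefficient function
  on the monomial basis D^{a_1} \<otimes> ... \<otimes> D^{a_n} (resp. t^{a_1} \<otimes> ... \<otimes> t^{a_n}),
  indexed by exponent lists of length n.\<close>

definition tens_ok :: "nat \<Rightarrow> (nat list \<Rightarrow> 'a::zero) \<Rightarrow> bool" where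
  "tens_ok n F \<longleftrightarrow> finite {\<alpha>. F \<alpha> \<noteq> 0} \<and> (\<forall>\<alpha>. F \<alpha> \<noteq> 0 \<longrightarrow> length \<alpha> = n)"

definition sing :: "nat list \<Rightarrow> 'a::zero \<Rightarrow> nat list \<Rightarrow> 'a" where
  "sing \<alpha> c = (\<lambda>\<beta>. if \<beta> = \<alpha> then c else 0)"

text \<open>Iterated coproduct of D^p in H: Delta_it k p = \<Delta>^{(k)}(D^p) as element of H^{\<otimes>k},
  with \<Delta>^{(1)} = id, \<Delta>^{(k+1)} = (id \<otimes> \<Delta>^{(k)}) \<Delta>, \<Delta>(D^p) = \<Sum>_j (p choose j) D^j \<otimes> D^{p-j}.\<close>

fun Delta_it :: "nat \<Rightarrow> nat \<Rightarrow> nat list \<Rightarrow> 'k::field_char_0" where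
  "Delta_it 0 p = (\<lambda>\<gamma>. if \<gamma> = [] \<and> p = 0 then 1 else 0)"
| "Delta_it (Suc 0) p = (\<lambda>\<gamma>. if \<gamma> = [p] then 1 else 0)"
| "Delta_it (Suc (Suc k)) p = (\<lambda>\<gamma>. case \<gamma> of [] \<Rightarrow> 0
      | j # \<gamma>' \<Rightarrow> if j \<le> p then of_nat (p choose j) * Delta_it (Suc k) (p - j) \<gamma>' else 0)"

text \<open>Submodule of H^{\<otimes>n} \<otimes> C spanned by the relations F \<Delta>^{(n)}(h) \<otimes> c - F \<otimes> h c
  (F = D^\<alpha> monomial, h = D^m); H^{\<otimes>n} \<otimes>_H C is the quotient by it.\<close>

inductive_set relsp ::
  "('k::field_char_0 \<Rightarrow> 'c::ab_group_add \<Rightarrow> 'c) \<Rightarrow> ('c \<Rightarrow> 'c) \<Rightarrow> nat \<Rightarrow> (nat list \<Rightarrow> 'c) set"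
  for sc d n where
  zero: "(\<lambda>_. 0) \<in> relsp sc d n"
| gen: "length \<alpha> = n \<Longrightarrow>
     (\<lambda>\<beta>. (\<Sum>\<gamma>\<in>{\<gamma>. (Delta_it n m \<gamma> :: 'k) \<noteq> 0}.
              sing (map2 (+) \<alpha> \<gamma>) (sc (Delta_it n m \<gamma>) c) \<beta>) - sing \<alpha> ((d ^^ m) c) \<beta>)
     \<in> relsp sc d n"
| add: "F \<in> relsp sc d n \<Longrightarrow> G \<in> relsp sc d n \<Longrightarrow> (\<lambda>\<beta>. F \<beta> + G \<beta>) \<in> relsp sc d n"
| scale: "F \<in> relsp sc d n \<Longrightarrow> (\<lambda>\<beta>. sc r (F \<beta>)) \<in> relsp sc d n"

text \<open>theta: the unique representative (h_1\<otimes>...\<otimes>h_{n-1}\<otimes>1) \<otimes>_H c of the class of A,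
  read as an element of H^{\<otimes>(n-1)} \<otimes> C.\<close>

definition theta ::
  "('k::field_char_0 \<Rightarrow> 'c::ab_group_add \<Rightarrow> 'c) \<Rightarrow> ('c \<Rightarrow> 'c) \<Rightarrow> nat \<Rightarrow> (nat list \<Rightarrow> 'c) \<Rightarrow> nat list \<Rightarrow> 'c"
  where
  "theta sc d n A =
     (let N = (THE N. tens_ok n N \<and> (\<forall>\<alpha>. N \<alpha> \<noteq> 0 \<longrightarrow> last \<alpha> = 0) \<and>
                      (\<lambda>\<beta>. A \<beta> - N \<beta>) \<in> relsp sc d n)
      in (\<lambda>\<beta>. N (\<beta> @ [0])))"

text \<open>Pairing <p, D^m> on k[t] x H with <t^k, D^m> = k! \<delta>_{k,m}; antipode S(t) = -t.\<close>

definition hpair :: "'k::field_char_0 poly \<Rightarrow> nat \<Rightarrow> 'k" where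
  "hpair p m = coeff p m * fact m"

definition antip :: "'k::field_char_0 poly \<Rightarrow> 'k poly" where
  "antip p = pcompose p [:0, -1:]"

text \<open>P^X for X \<in> k[t]^{\<otimes>(n-1)} (coefficient function), applied to an element of
  H^{\<otimes>n} \<otimes>_H C (given by a representative in H^{\<otimes>n} \<otimes> C).\<close>

definition Pmap ::
  "('k::field_char_0 \<Rightarrow> 'c::ab_group_add \<Rightarrow> 'c) \<Rightarrow> ('c \<Rightarrow> 'c) \<Rightarrow> nat \<Rightarrow> (nat list \<Rightarrow> 'k)
     \<Rightarrow> (nat list \<Rightarrow> 'c) \<Rightarrow> 'c"
  where
  "Pmap sc d n X A =
     (let N = theta sc d n A in
      \<Sum>\<kappa>\<in>{\<kappa>. X \<kappa> \<noteq> 0}. \<Sum>\<beta>\<in>{\<beta>. N \<beta> \<noteq> 0}.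
        sc (X \<kappa> * (\<Prod>i<n - 1. hpair (antip (monom 1 (\<kappa> ! i))) (\<beta> ! i))) (N \<beta>))"

definition poly1 :: "'k::field_char_0 poly \<Rightarrow> nat list \<Rightarrow> 'k" where
  "poly1 w = (\<lambda>\<kappa>. case \<kappa> of [k] \<Rightarrow> coeff w k | _ \<Rightarrow> 0)"

text \<open>Pseudoproduct a * b = \<Sum>_s (-D)^s/s! \<otimes> 1 \<otimes>_H a_(s) b, as element of H^{\<otimes>2} \<otimes> C.\<close>

definition pseudo ::
  "('k::field_char_0 \<Rightarrow> 'c::ab_group_add \<Rightarrow> 'c) \<Rightarrow> (nat \<Rightarrow> 'c \<Rightarrow> 'c \<Rightarrow> 'c) \<Rightarrow> 'c \<Rightarrow> 'c \<Rightarrow> nat list \<Rightarrow> 'c"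
  where
  "pseudo sc pr a b = (\<lambda>\<alpha>. case \<alpha> of [s, q] \<Rightarrow>
       if q = 0 then sc ((-1) ^ s / fact s) (pr s a b) else 0 | _ \<Rightarrow> 0)"

text \<open>Expanded pseudoproduct of A \<in> H^{\<otimes>s} \<otimes>_H C and B \<in> H^{\<otimes>m} \<otimes>_H C (on representatives):
  (D^\<alpha> \<otimes>_H a) * (D^\<beta> \<otimes>_H b) = \<Sum> D^\<alpha> \<Delta>^{(s)}(f_i) \<otimes> D^\<beta> \<Delta>^{(m)}(g_i) \<otimes>_H c_i,
  extended bilinearly.\<close>

definition EP ::
  "('k::field_char_0 \<Rightarrow> 'c::ab_group_add \<Rightarrow> 'c) \<Rightarrow> (nat \<Rightarrow> 'c \<Rightarrow> 'c \<Rightarrow> 'c) \<Rightarrow> nat \<Rightarrow> nat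
     \<Rightarrow> (nat list \<Rightarrow> 'c) \<Rightarrow> (nat list \<Rightarrow> 'c) \<Rightarrow> nat list \<Rightarrow> 'c"
  where
  "EP sc pr s m A B = (\<lambda>\<kappa>.
     \<Sum>\<alpha>\<in>{\<alpha>. A \<alpha> \<noteq> 0}. \<Sum>\<beta>\<in>{\<beta>. B \<beta> \<noteq> 0}.
       (let ab = pseudo sc pr (A \<alpha>) (B \<beta>) in
        \<Sum>\<rho>\<in>{\<rho>. ab \<rho> \<noteq> 0}.
        \<Sum>\<gamma>\<in>{\<gamma>. (Delta_it s (\<rho> ! 0) \<gamma> :: 'k) \<noteq> 0}.
        \<Sum>\<delta>\<in>{\<delta>. (Delta_it m (\<rho> ! 1) \<delta> :: 'k) \<noteq> 0}.
          (if \<kappa> = map2 (+) \<alpha> \<gamma> @ map2 (+) \<beta> \<delta>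
           then sc (Delta_it s (\<rho> ! 0) \<gamma> * Delta_it m (\<rho> ! 1) \<delta>) (ab \<rho>) else 0)))"

definition tens3 :: "nat \<Rightarrow> nat \<Rightarrow> (nat list \<Rightarrow> 'k::field_char_0) \<Rightarrow> 'k poly \<Rightarrow> (nat list \<Rightarrow> 'k)
     \<Rightarrow> nat list \<Rightarrow> 'k" where
  "tens3 r q X y Z = (\<lambda>\<kappa>. if length \<kappa> = r + 1 + q
      then X (take r \<kappa>) * coeff y (\<kappa> ! r) * Z (drop (r + 1) \<kappa>) else 0)"

end

theory Submission
  imports Defs
begin

(* Both sides are linear in A, B, X, y and Z, so it suffices to understand the projections on
   representatives and to compare monomials.  For an exponent list kappa the functional
   Pmono kappa R = sum_alpha Pcoeff kappa alpha * D^(|alpha| - |kappa|) (R alpha) kills the relations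
   defining the tensor product over H, because the coefficients Pcoeff are compatible with the
   coproduct of D, and it is diagonal on normal forms (last exponent 0); hence
   P^X = sum_kappa X(kappa) * Pmono kappa.
   On the monomial D^alpha (x) D^beta (x)_H a*b the left-hand side becomes a sum over the coproduct
   of (-D)^s/s!.  The Vandermonde identity for falling factorials evaluates the coproduct, and the
   sesquilinearity of the products a_(s) b collapses the remaining sum to a single a_(L) D^e b.
   On the right-hand side the coproduct of x contributes the binomials prod_i C(kappa_i, j_i); a
   multivariate Vandermonde identity and an alternating binomial identity produce the same value. *)

section \<open>Falling factorials and lists of exponents\<close>

definition ffact :: "nat \<Rightarrow> nat \<Rightarrow> nat" where
  "ffact x m = (\<Prod>i<m. x - i)"

lemma ffact_0 [simp]: "ffact x 0 = 1"
  by (simp add: ffact_def)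

lemma ffact_Suc: "ffact x (Suc m) = ffact x m * (x - m)"
  by (simp add: ffact_def)

lemma ffact_eq_0: "x < m \<Longrightarrow> ffact x m = 0"
  unfolding ffact_def by (rule prod_zero) auto

lemma ffact_eq_fact_binomial: "ffact x m = fact m * (x choose m)"
proof (induction m)
  case (Suc m)
  have "(x - m) * (x choose m) = Suc m * (x choose Suc m)"
    using binomial_absorb_comp[of x m] binomial_absorption[of m x] by metis
  then show ?case
    using Suc by (simp add: ffact_Suc algebra_simps)
qed simp

lemma ffact_neq_0_iff: "ffact x m \<noteq> 0 \<longleftrightarrow> m \<le> x"
  by (simp add: ffact_eq_fact_binomial not_less)

lemma ffact_pos_iff: "0 < ffact x m \<longleftrightarrow> m \<le> x"
  by (simp add: ffact_eq_fact_binomial)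

lemma ffact_self: "ffact x x = fact x"
  by (simp add: ffact_eq_fact_binomial)

lemma ffact_Suc_Suc: "ffact (Suc x) (Suc m) = Suc x * ffact x m"
  unfolding ffact_def by (simp only: prod.lessThan_Suc_shift) simp

lemma ffact_Suc_pascal: "ffact (Suc p) (Suc m) = ffact p (Suc m) + Suc m * ffact p m"
proof (cases "m \<le> p")
  case True
  have "ffact (Suc p) (Suc m) = ((p - m) + Suc m) * ffact p m"
    using True by (simp add: ffact_Suc_Suc)
  also have "\<dots> = ffact p (Suc m) + Suc m * ffact p m"
    by (simp add: ffact_Suc algebra_simps)
  finally show ?thesis .
qed (simp add: ffact_Suc_Suc ffact_Suc ffact_eq_0)

lemma ffact_add: "ffact x (a + b) = ffact x a * ffact (x - a) b"
  by (induction b) (auto simp: ffact_Suc algebra_simps)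

lemma of_nat_ffact_div_fact: "(of_nat (ffact x m) :: 'k::field_char_0) / fact m = of_nat (x choose m)"
  by (simp add: ffact_eq_fact_binomial)

lemma ffact_vandermonde: "ffact (a + b) s = (\<Sum>j\<le>s. (s choose j) * ffact a j * ffact b (s - j))"
proof -
  have "(s choose j) * ffact a j * ffact b (s - j) = fact s * ((a choose j) * (b choose (s - j)))"
    if "j \<le> s" for j
  proof -
    have "(s choose j) * ffact a j * ffact b (s - j) =
        (fact j * fact (s - j) * (s choose j)) * ((a choose j) * (b choose (s - j)))"
      by (simp add: ffact_eq_fact_binomial mult_ac)
    also have "fact j * fact (s - j) * (s choose j) = (fact s :: nat)"
      using binomial_fact_lemma that by simp
    finally show ?thesis .
  qed
  then have "(\<Sum>j\<le>s. (s choose j) * ffact a j * ffact b (s - j)) =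
      fact s * (\<Sum>j\<le>s. (a choose j) * (b choose (s - j)))"
    by (simp add: sum_distrib_left)
  then show ?thesis
    by (simp add: ffact_eq_fact_binomial vandermonde)
qed

lemma binomial_mult_ffact: "(x choose j) * ffact (x - j) a = ffact x a * ((x - a) choose j)"
proof (cases "j + a \<le> x")
  case True
  have "(x choose (j + a)) * ((j + a) choose j) = (x choose j) * ((x - j) choose a)"
    "(x choose (j + a)) * ((j + a) choose a) = (x choose a) * ((x - a) choose j)"
    using choose_mult[of j "j + a" x] choose_mult[of a "j + a" x] True by simp_all
  moreover have "(j + a) choose j = (j + a) choose a"
    using binomial_symmetric[of j "j + a"] by simp
  ultimately show ?thesis
    by (simp add: ffact_eq_fact_binomial mult_ac)
next
  case False
  then have "(x choose j) * ffact (x - j) a = 0"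
    by (cases "j \<le> x") (simp_all add: ffact_eq_0 binomial_eq_0)
  moreover have "ffact x a * ((x - a) choose j) = 0"
    using False by (cases "a \<le> x") (simp_all add: ffact_eq_0 binomial_eq_0)
  ultimately show ?thesis
    by (simp only:)
qed

lemma binomial_ffact_reflect:
  assumes "i \<le> L"
  shows "(L choose (L - i)) * ffact q (L + L2 - (L - i)) = ffact q L2 * (((q - L2) choose i) * ffact L i)"
proof -
  have "L choose (L - i) = L choose i" and "L + L2 - (L - i) = L2 + i"
    using assms binomial_symmetric[of i L] by simp_all
  then show ?thesis
    by (simp add: ffact_add ffact_eq_fact_binomial[of "q - L2"] ffact_eq_fact_binomial[of L] mult_ac)
qed

lemma sum_list_eq_sum_lessThan: "sum_list xs = (\<Sum>i<length xs. xs ! i)"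
  by (simp add: sum_list_sum_nth atLeast0LessThan)

lemma sum_list_map2_plus:
  "length a = length b \<Longrightarrow> sum_list (map2 (+) a b) = sum_list a + sum_list (b :: nat list)"
  by (induction a arbitrary: b) (auto simp: Suc_length_conv)

lemma list_all2_le_sum_list: "list_all2 (\<le>) a b \<Longrightarrow> sum_list a \<le> sum_list (b :: nat list)"
  by (induction rule: list_all2_induct) auto

lemma sum_list_map2_minus:
  "list_all2 (\<le>) a b \<Longrightarrow> sum_list (map2 (-) b a) = sum_list b - sum_list (a :: nat list)"
proof (induction rule: list_all2_induct)
  case (Cons x xs y ys)
  then show ?case
    using list_all2_le_sum_list[OF Cons(2)] by simp
qed simp

lemma list_all2_le_sum_list_antisym:
  "list_all2 (\<le>) a b \<Longrightarrow> sum_list b \<le> sum_list a \<Longrightarrow> a = (b :: nat list)"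
proof (induction rule: list_all2_induct)
  case (Cons x xs y ys)
  then show ?case
    using list_all2_le_sum_list[OF Cons(2)] by simp
qed simp

lemma prod_ffact_neq_0_iff:
  "length a = length b \<Longrightarrow> (\<Prod>i<length b. ffact (b ! i) (a ! i)) \<noteq> 0 \<longleftrightarrow> list_all2 (\<le>) a b"
  by (auto simp: list_all2_conv_all_nth ffact_pos_iff)

lemma list_all2_le_Cons_right:
  "{j. list_all2 (\<le>) j (m # M)} = (\<lambda>(j0, j'). j0 # j') ` ({..m} \<times> {j. list_all2 (\<le>) j M})"
  by (force simp: list_all2_Cons2)


section \<open>The iterated coproduct\<close>

definition bounded_lists :: "nat \<Rightarrow> nat \<Rightarrow> nat list set" where
  "bounded_lists n M = {\<gamma>. set \<gamma> \<subseteq> {..M} \<and> length \<gamma> = n}"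

lemma finite_bounded_lists [simp]: "finite (bounded_lists n M)"
  unfolding bounded_lists_def by (rule finite_lists_length_eq) simp

lemma bounded_lists_Suc: "bounded_lists (Suc n) M = (\<lambda>(j, g). j # g) ` ({..M} \<times> bounded_lists n M)"
  by (force simp: bounded_lists_def length_Suc_conv)

lemma Delta_it_nonzeroD:
  "(Delta_it n m \<gamma> :: 'k::field_char_0) \<noteq> 0 \<Longrightarrow> length \<gamma> = n \<and> sum_list \<gamma> = m"
proof (induction n m arbitrary: \<gamma> rule: Delta_it.induct)
  case (3 k p)
  then obtain j \<gamma>' where "\<gamma> = j # \<gamma>'" "j \<le> p" "(Delta_it (Suc k) (p - j) \<gamma>' :: 'k) \<noteq> 0"
    by (auto split: list.splits if_splits)
  with "3.IH" show ?case
    by auto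
qed (auto split: if_splits)

lemma Delta_it_support_subset: "{\<gamma>. (Delta_it n m \<gamma> :: 'k::field_char_0) \<noteq> 0} \<subseteq> bounded_lists n m"
  using Delta_it_nonzeroD member_le_sum_list unfolding bounded_lists_def by fastforce

lemma finite_Delta_it_support [simp]: "finite {\<gamma>. (Delta_it n m \<gamma> :: 'k::field_char_0) \<noteq> 0}"
  using Delta_it_support_subset finite_bounded_lists by (rule finite_subset)

lemma Delta_it_exponent_0: "(Delta_it n 0 \<gamma> :: 'k::field_char_0) = (if \<gamma> = replicate n 0 then 1 else 0)"
proof (induction n arbitrary: \<gamma>)
  case (Suc n)
  then show ?case
    by (cases n; cases \<gamma>) auto
qed simp

lemma Delta_it_support_exponent_0: "{\<gamma>. (Delta_it n 0 \<gamma> :: 'k::field_char_0) \<noteq> 0} = {replicate n 0}"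
  by (auto simp: Delta_it_exponent_0 simp del: replicate.simps)

text \<open>\<open>\<Delta>(D^(m+1)) = \<Delta>(D^m) \<Delta>(D)\<close>, where \<open>\<Delta>(D)\<close> is the sum of the tensors with \<open>D\<close> in one slot
  and \<open>1\<close> elsewhere.\<close>

lemma Delta_it_Suc_exponent:
  "length \<gamma> = Suc k \<Longrightarrow> (Delta_it (Suc k) (Suc m) \<gamma> :: 'k::field_char_0) =
    (\<Sum>i<Suc k. if 1 \<le> \<gamma> ! i then Delta_it (Suc k) m (\<gamma>[i := \<gamma> ! i - 1]) else 0)"
proof (induction k arbitrary: m \<gamma>)
  case 0
  then obtain g where "\<gamma> = [g]"
    by (cases \<gamma>) auto
  then show ?case
    by auto
next
  case (Suc k)
  then obtain j g where G: "\<gamma> = j # g" and lg: "length g = Suc k"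
    by (cases \<gamma>) auto
  have tail: "(\<Sum>i<Suc k. if 1 \<le> g ! i then (Delta_it (Suc (Suc k)) m (j # g[i := g ! i - 1]) :: 'k) else 0)
      = (if j \<le> m then of_nat (m choose j) * Delta_it (Suc k) (Suc (m - j)) g else 0)"
  proof (cases "j \<le> m")
    case True
    then have "(\<Sum>i<Suc k. if 1 \<le> g ! i then (Delta_it (Suc (Suc k)) m (j # g[i := g ! i - 1]) :: 'k) else 0)
       = of_nat (m choose j) *
         (\<Sum>i<Suc k. if 1 \<le> g ! i then Delta_it (Suc k) (m - j) (g[i := g ! i - 1]) else 0)"
      unfolding sum_distrib_left by (intro sum.cong refl) simp
    then show ?thesis
      using True by (simp add: Suc.IH[OF lg])
  qed (simp, intro sum.neutral, auto)
  have "(\<Sum>i<Suc (Suc k). if 1 \<le> \<gamma> ! i then (Delta_it (Suc (Suc k)) m (\<gamma>[i := \<gamma> ! i - 1]) :: 'k) else 0)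
     = (if 1 \<le> j then Delta_it (Suc (Suc k)) m ((j - 1) # g) else 0) +
       (\<Sum>i<Suc k. if 1 \<le> g ! i then (Delta_it (Suc (Suc k)) m (j # g[i := g ! i - 1]) :: 'k) else 0)"
    unfolding G by (subst sum.lessThan_Suc_shift) (simp cong: if_cong)
  also have "\<dots> = Delta_it (Suc (Suc k)) (Suc m) \<gamma>"
    unfolding tail G
    by (cases j; cases "j - 1 \<le> m"; cases "j - 1 = m") (auto simp: Suc_diff_le Suc_diff_Suc algebra_simps)
  finally show ?case
    by simp
qed

lemma sum_update_Suc_nth:
  fixes f :: "nat list \<Rightarrow> 'a::zero" and h :: "nat list \<Rightarrow> 'a \<Rightarrow> 'b::comm_monoid_add"
  assumes "finite T" and "\<And>\<gamma>. h \<gamma> 0 = 0"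
    and f: "\<And>\<gamma>. f \<gamma> \<noteq> 0 \<Longrightarrow> i < length \<gamma> \<and> \<gamma>[i := Suc (\<gamma> ! i)] \<in> T"
  shows "(\<Sum>\<gamma>\<in>T. h \<gamma> (if 1 \<le> \<gamma> ! i then f (\<gamma>[i := \<gamma> ! i - 1]) else 0)) =
    (\<Sum>\<gamma>\<in>{\<gamma>. f \<gamma> \<noteq> 0}. h (\<gamma>[i := Suc (\<gamma> ! i)]) (f \<gamma>))"
proof -
  define up where "up \<gamma> = \<gamma>[i := Suc (\<gamma> ! i)]" for \<gamma> :: "nat list"
  define g where "g \<gamma> = h \<gamma> (if 1 \<le> \<gamma> ! i then f (\<gamma>[i := \<gamma> ! i - 1]) else 0)" for \<gamma>
  let ?S = "{\<gamma>. f \<gamma> \<noteq> 0}"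
  have down_up: "(up \<gamma>)[i := \<gamma> ! i] = \<gamma>" "up \<gamma> ! i = Suc (\<gamma> ! i)" if "\<gamma> \<in> ?S" for \<gamma>
    using that f by (auto simp: up_def)
  have inj: "inj_on up ?S"
    by (rule inj_onI) (metis down_up nat.inject)
  have "(\<Sum>\<gamma>\<in>T. g \<gamma>) = (\<Sum>\<gamma>\<in>up ` ?S. g \<gamma>)"
  proof (rule sum.mono_neutral_right[OF \<open>finite T\<close>])
    show "up ` ?S \<subseteq> T"
      using f by (auto simp: up_def)
    show "\<forall>\<gamma>\<in>T - up ` ?S. g \<gamma> = 0"
    proof
      fix \<gamma> assume \<gamma>: "\<gamma> \<in> T - up ` ?S"
      show "g \<gamma> = 0"
      proof (cases "1 \<le> \<gamma> ! i \<and> f (\<gamma>[i := \<gamma> ! i - 1]) \<noteq> 0")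
        case True
        then have "\<gamma> = up (\<gamma>[i := \<gamma> ! i - 1])"
          using f[of "\<gamma>[i := \<gamma> ! i - 1]"] by (auto simp: up_def)
        then have "\<gamma> \<in> up ` ?S"
          by (rule image_eqI) (use True in simp)
        then show ?thesis
          using \<gamma> by blast
      qed (auto simp: g_def \<open>\<And>\<gamma>. h \<gamma> 0 = 0\<close>)
    qed
  qed
  also have "\<dots> = (\<Sum>\<gamma>\<in>?S. g (up \<gamma>))"
    by (rule sum.reindex[OF inj, unfolded comp_def])
  also have "\<dots> = (\<Sum>\<gamma>\<in>?S. h (up \<gamma>) (f \<gamma>))"
    by (rule sum.cong) (simp_all add: g_def down_up)
  finally show ?thesis
    unfolding g_def up_def .
qed

lemma sum_Delta_it_Suc_exponent:
  fixes h :: "nat list \<Rightarrow> 'k::field_char_0 \<Rightarrow> 'b::ab_group_add"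
  assumes add: "\<And>\<gamma> x y. h \<gamma> (x + y) = h \<gamma> x + h \<gamma> y"
  shows "(\<Sum>\<gamma>\<in>{\<gamma>. (Delta_it (Suc k) (Suc m) \<gamma> :: 'k) \<noteq> 0}. h \<gamma> (Delta_it (Suc k) (Suc m) \<gamma>)) =
    (\<Sum>i<Suc k. \<Sum>\<gamma>\<in>{\<gamma>. (Delta_it (Suc k) m \<gamma> :: 'k) \<noteq> 0}. h (\<gamma>[i := Suc (\<gamma> ! i)]) (Delta_it (Suc k) m \<gamma>))"
proof -
  let ?L = "bounded_lists (Suc k) (Suc m)"
  have h0: "h \<gamma> 0 = 0" for \<gamma>
    using add[of \<gamma> 0 0] by simp
  have h_sum: "h \<gamma> (sum f I) = (\<Sum>i\<in>I. h \<gamma> (f i))" for \<gamma> f and I :: "nat set"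
    by (induct I rule: infinite_finite_induct) (simp_all add: h0 add)
  have shift_in_bounds: "i < length \<gamma> \<and> \<gamma>[i := Suc (\<gamma> ! i)] \<in> ?L"
    if i: "i < Suc k" and "(Delta_it (Suc k) m \<gamma> :: 'k) \<noteq> 0" for i \<gamma>
  proof -
    have \<gamma>: "length \<gamma> = Suc k" "set \<gamma> \<subseteq> {..m}"
      using that Delta_it_support_subset[of "Suc k" m] by (auto simp: bounded_lists_def)
    moreover have "\<gamma> ! i \<in> set \<gamma>"
      using i \<gamma>(1) by simp
    ultimately have "Suc (\<gamma> ! i) \<le> Suc m"
      by auto
    then have "set (\<gamma>[i := Suc (\<gamma> ! i)]) \<subseteq> {..Suc m}"
      using \<gamma> set_update_subset_insert[of \<gamma> i "Suc (\<gamma> ! i)"] by auto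
    then show ?thesis
      using \<gamma> i by (simp add: bounded_lists_def)
  qed
  have "(\<Sum>\<gamma>\<in>{\<gamma>. (Delta_it (Suc k) (Suc m) \<gamma> :: 'k) \<noteq> 0}. h \<gamma> (Delta_it (Suc k) (Suc m) \<gamma>)) =
      (\<Sum>\<gamma>\<in>?L. h \<gamma> (Delta_it (Suc k) (Suc m) \<gamma>))"
    by (rule sum.mono_neutral_left) (auto simp: Delta_it_support_subset h0)
  also have "\<dots> = (\<Sum>\<gamma>\<in>?L. \<Sum>i<Suc k.
      h \<gamma> (if 1 \<le> \<gamma> ! i then Delta_it (Suc k) m (\<gamma>[i := \<gamma> ! i - 1]) else 0))"
    by (intro sum.cong refl)
      (simp add: Delta_it_Suc_exponent bounded_lists_def h_sum del: sum.lessThan_Suc)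
  also have "\<dots> = (\<Sum>i<Suc k. \<Sum>\<gamma>\<in>?L.
      h \<gamma> (if 1 \<le> \<gamma> ! i then Delta_it (Suc k) m (\<gamma>[i := \<gamma> ! i - 1]) else 0))"
    by (rule sum.swap)
  also have "\<dots> = (\<Sum>i<Suc k. \<Sum>\<gamma>\<in>{\<gamma>. (Delta_it (Suc k) m \<gamma> :: 'k) \<noteq> 0}.
      h (\<gamma>[i := Suc (\<gamma> ! i)]) (Delta_it (Suc k) m \<gamma>))"
    using shift_in_bounds by (intro sum.cong refl sum_update_Suc_nth) (auto simp: h0)
  finally show ?thesis .
qed

lemma sum_Delta_it_ffact_bounded:
  "length N = Suc t \<Longrightarrow> s \<le> M \<Longrightarrow>
   (\<Sum>\<gamma>\<in>bounded_lists (Suc t) M. (Delta_it (Suc t) s \<gamma> :: 'k::field_char_0) *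
      of_nat (\<Prod>i<Suc t. ffact (N ! i) (\<gamma> ! i))) = of_nat (ffact (sum_list N) s)"
proof (induction t arbitrary: N s)
  case 0
  then obtain n0 where N: "N = [n0]"
    by (cases N) auto
  have mem: "[s] \<in> bounded_lists (Suc 0) M"
    using \<open>s \<le> M\<close> by (simp add: bounded_lists_def)
  have "(\<Sum>\<gamma>\<in>bounded_lists (Suc 0) M. (Delta_it (Suc 0) s \<gamma> :: 'k) *
      of_nat (\<Prod>i<Suc 0. ffact (N ! i) (\<gamma> ! i))) =
      (\<Sum>\<gamma>\<in>bounded_lists (Suc 0) M. if \<gamma> = [s] then of_nat (ffact n0 s) else 0)"
    by (intro sum.cong refl) (simp add: N)
  also have "\<dots> = of_nat (ffact n0 s)"
    using \<open>s \<le> M\<close> mem by (simp add: sum.delta)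
  finally show ?case
    by (simp add: N)
next
  case (Suc t)
  then obtain n0 N' where N: "N = n0 # N'" and lN: "length N' = Suc t"
    by (cases N) auto
  let ?f = "\<lambda>\<gamma>. (Delta_it (Suc (Suc t)) s \<gamma> :: 'k) * of_nat (\<Prod>i<Suc (Suc t). ffact (N ! i) (\<gamma> ! i))"
  have inner: "(\<Sum>g\<in>bounded_lists (Suc t) M. ?f (j # g)) =
      (if j \<le> s then of_nat ((s choose j) * ffact n0 j * ffact (sum_list N') (s - j)) else 0)" for j
  proof (cases "j \<le> s")
    case True
    have "(\<Sum>g\<in>bounded_lists (Suc t) M. ?f (j # g)) =
        of_nat (s choose j) * of_nat (ffact n0 j) * (\<Sum>g\<in>bounded_lists (Suc t) M.
          (Delta_it (Suc t) (s - j) g :: 'k) * of_nat (\<Prod>i<Suc t. ffact (N' ! i) (g ! i)))"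
      using True unfolding sum_distrib_left
      by (intro sum.cong refl)
        (simp add: N prod.lessThan_Suc_shift[of _ "Suc t"] del: prod.lessThan_Suc of_nat_prod)
    also have "\<dots> = of_nat (s choose j) * of_nat (ffact n0 j) * of_nat (ffact (sum_list N') (s - j))"
      using Suc.prems by (subst Suc.IH[OF lN]) simp_all
    finally show ?thesis
      using True by simp
  qed simp
  have "(\<Sum>\<gamma>\<in>bounded_lists (Suc (Suc t)) M. ?f \<gamma>) = (\<Sum>j\<le>M. \<Sum>g\<in>bounded_lists (Suc t) M. ?f (j # g))"
    unfolding bounded_lists_Suc[of "Suc t"] sum.cartesian_product
    by (subst sum.reindex) (auto simp: inj_on_def case_prod_beta)
  also have "\<dots> = (\<Sum>j\<le>s. of_nat ((s choose j) * ffact n0 j * ffact (sum_list N') (s - j)))"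
    unfolding inner using Suc.prems(2) by (intro sum.mono_neutral_cong_right) auto
  also have "\<dots> = of_nat (ffact (sum_list N) s)"
    by (simp add: N ffact_vandermonde del: of_nat_mult)
  finally show ?case .
qed

lemma sum_Delta_it_ffact:
  "length N = Suc t \<Longrightarrow>
   (\<Sum>\<gamma>\<in>{\<gamma>. (Delta_it (Suc t) s \<gamma> :: 'k::field_char_0) \<noteq> 0}.
      (Delta_it (Suc t) s \<gamma> :: 'k) * of_nat (\<Prod>i<Suc t. ffact (N ! i) (\<gamma> ! i))) =
    of_nat (ffact (sum_list N) s)"
proof -
  assume "length N = Suc t"
  have "(\<Sum>\<gamma>\<in>{\<gamma>. (Delta_it (Suc t) s \<gamma> :: 'k) \<noteq> 0}.
      Delta_it (Suc t) s \<gamma> * of_nat (\<Prod>i<Suc t. ffact (N ! i) (\<gamma> ! i))) =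
      (\<Sum>\<gamma>\<in>bounded_lists (Suc t) s.
        (Delta_it (Suc t) s \<gamma> :: 'k) * of_nat (\<Prod>i<Suc t. ffact (N ! i) (\<gamma> ! i)))"
    by (rule sum.mono_neutral_left) (auto simp: Delta_it_support_subset)
  also have "\<dots> = of_nat (ffact (sum_list N) s)"
    by (rule sum_Delta_it_ffact_bounded[OF \<open>length N = Suc t\<close> order.refl])
  finally show ?thesis .
qed

lemma sum_Delta_it_ffact_shift:
  assumes lK: "length K = Suc t" and la: "length \<alpha> = Suc t"
  shows "(\<Sum>\<gamma>\<in>{\<gamma>. (Delta_it (Suc t) s \<gamma> :: 'k::field_char_0) \<noteq> 0}.
            (Delta_it (Suc t) s \<gamma> :: 'k) * of_nat (\<Prod>i<Suc t. ffact (K ! i) (\<alpha> ! i + \<gamma> ! i)))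
     = of_nat (\<Prod>i<Suc t. ffact (K ! i) (\<alpha> ! i)) * of_nat (ffact (sum_list K - sum_list \<alpha>) s)"
proof -
  let ?N = "map2 (-) K \<alpha>" and ?P = "\<Prod>i<Suc t. ffact (K ! i) (\<alpha> ! i)"
  have "(\<Sum>\<gamma>\<in>{\<gamma>. (Delta_it (Suc t) s \<gamma> :: 'k) \<noteq> 0}.
      (Delta_it (Suc t) s \<gamma> :: 'k) * of_nat (\<Prod>i<Suc t. ffact (K ! i) (\<alpha> ! i + \<gamma> ! i))) =
      of_nat ?P * (\<Sum>\<gamma>\<in>{\<gamma>. (Delta_it (Suc t) s \<gamma> :: 'k) \<noteq> 0}.
        (Delta_it (Suc t) s \<gamma> :: 'k) * of_nat (\<Prod>i<Suc t. ffact (?N ! i) (\<gamma> ! i)))"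
    unfolding sum_distrib_left
    by (intro sum.cong refl) (simp add: ffact_add prod.distrib lK la del: of_nat_prod)
  also have "\<dots> = of_nat ?P * of_nat (ffact (sum_list ?N) s)"
    using lK la by (subst sum_Delta_it_ffact) simp_all
  also have "\<dots> = of_nat ?P * of_nat (ffact (sum_list K - sum_list \<alpha>) s)"
  proof (cases "?P = 0")
    case False
    then have "list_all2 (\<le>) \<alpha> K"
      using prod_ffact_neq_0_iff[of \<alpha> K] lK la by simp
    then show ?thesis
      by (simp add: sum_list_map2_minus)
  qed simp
  finally show ?thesis .
qed

section \<open>The coefficients of the projections on monomials\<close>

text \<open>For \<open>\<alpha> = a @ [p]\<close>, the projection \<open>P^(t^\<kappa>)\<close> maps \<open>D^\<alpha> \<otimes>_H c\<close> to
  \<open>Pcoeff \<kappa> \<alpha> \<cdot> D^(|\<alpha>| - |\<kappa>|) c\<close>: moving \<open>D^p\<close> from the last slot onto \<open>c\<close> puts powers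
  of \<open>-D\<close> into the other slots, and pairing \<open>D^(a_i + e_i)\<close> with \<open>S(t^\<kappa>_i)\<close> produces the
  falling factorials.\<close>

definition Pcoeff :: "nat list \<Rightarrow> nat list \<Rightarrow> 'k::field_char_0" where
  "Pcoeff \<kappa> \<alpha> = (-1) ^ sum_list (butlast \<alpha>) * of_nat (\<Prod>i<length \<kappa>. ffact (\<kappa> ! i) (\<alpha> ! i)) *
      of_nat (ffact (last \<alpha>) (sum_list \<kappa> - sum_list (butlast \<alpha>)))"

lemma Pcoeff_snoc:
  "length a = length \<kappa> \<Longrightarrow> Pcoeff \<kappa> (a @ [p]) =
   (-1) ^ sum_list a * of_nat (\<Prod>i<length \<kappa>. ffact (\<kappa> ! i) (a ! i)) *
     of_nat (ffact p (sum_list \<kappa> - sum_list a))"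
  unfolding Pcoeff_def by (simp add: nth_append)

lemma Pcoeff_eq_0_if_sum_less:
  assumes l: "length \<alpha> = Suc (length \<kappa>)" and s: "sum_list \<alpha> < sum_list \<kappa>"
  shows "Pcoeff \<kappa> \<alpha> = 0"
proof -
  obtain a p where ap: "\<alpha> = a @ [p]" and la: "length a = length \<kappa>"
    using l by (cases \<alpha> rule: rev_cases) auto
  show ?thesis
  proof (cases "list_all2 (\<le>) a \<kappa>")
    case True
    then have "p < sum_list \<kappa> - sum_list a"
      using s ap list_all2_le_sum_list by fastforce
    then show ?thesis
      using ap la by (simp add: Pcoeff_snoc ffact_eq_0)
  next
    case False
    then have "(\<Prod>i<length \<kappa>. ffact (\<kappa> ! i) (a ! i)) = 0"
      using prod_ffact_neq_0_iff[OF la] by blast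
    then show ?thesis
      using ap la by (simp add: Pcoeff_snoc)
  qed
qed

lemma prod_ffact_update_Suc:
  assumes "i < length \<kappa>" "length a = length \<kappa>"
  shows "(\<Prod>j<length \<kappa>. ffact (\<kappa> ! j) (a[i := Suc (a ! i)] ! j)) =
    (\<kappa> ! i - a ! i) * (\<Prod>j<length \<kappa>. ffact (\<kappa> ! j) (a ! j))"
proof -
  have i: "i \<in> {..<length \<kappa>}"
    using assms by simp
  have "(\<Prod>j\<in>{..<length \<kappa>} - {i}. ffact (\<kappa> ! j) (a[i := Suc (a ! i)] ! j)) =
      (\<Prod>j\<in>{..<length \<kappa>} - {i}. ffact (\<kappa> ! j) (a ! j))"
    by (intro prod.cong refl) auto
  then show ?thesis
    using assms unfolding prod.remove[OF finite_lessThan i] by (simp add: ffact_Suc)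
qed

text \<open>The coefficients are compatible with the relation \<open>F \<Delta>(D) \<otimes>_H c = F \<otimes>_H D c\<close>.\<close>

lemma sum_Pcoeff_update_Suc:
  assumes l: "length \<alpha> = Suc (length \<kappa>)"
  shows "(\<Sum>i<Suc (length \<kappa>). (Pcoeff \<kappa> (\<alpha>[i := Suc (\<alpha> ! i)]) :: 'k::field_char_0)) = Pcoeff \<kappa> \<alpha>"
proof -
  obtain a p where ap: "\<alpha> = a @ [p]" and la: "length a = length \<kappa>"
    using l by (cases \<alpha> rule: rev_cases) auto
  define F where "F = (\<Prod>j<length \<kappa>. ffact (\<kappa> ! j) (a ! j))"
  define M where "M = sum_list \<kappa> - sum_list a"
  define \<sigma> where "\<sigma> = ((-1) ^ sum_list a * of_nat F :: 'k)"
  have last: "Pcoeff \<kappa> (\<alpha>[length \<kappa> := Suc (\<alpha> ! length \<kappa>)]) = \<sigma> * of_nat (ffact (Suc p) M)"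
    using ap la by (simp add: Pcoeff_snoc list_update_append F_def M_def \<sigma>_def nth_append)
  have inner: "Pcoeff \<kappa> (\<alpha>[i := Suc (\<alpha> ! i)]) = - (\<sigma> * of_nat (ffact p (M - 1)) * of_nat (\<kappa> ! i - a ! i))"
    if i: "i < length \<kappa>" for i
  proof -
    have "\<alpha>[i := Suc (\<alpha> ! i)] = a[i := Suc (a ! i)] @ [p]"
      using ap la i by (simp add: list_update_append nth_append)
    moreover have "sum_list (a[i := Suc (a ! i)]) = Suc (sum_list a)"
      using i la by (simp add: sum_list_update)
    ultimately show ?thesis
      using i la by (simp add: Pcoeff_snoc prod_ffact_update_Suc F_def M_def \<sigma>_def mult_ac del: of_nat_prod)
  qed
  have sum_diff: "F = 0 \<or> (\<Sum>i<length \<kappa>. \<kappa> ! i - a ! i) = M"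
    using prod_ffact_neq_0_iff[OF la] sum_list_map2_minus[of a \<kappa>] la
    by (auto simp: F_def M_def sum_list_eq_sum_lessThan)
  have "(\<Sum>i<Suc (length \<kappa>). (Pcoeff \<kappa> (\<alpha>[i := Suc (\<alpha> ! i)]) :: 'k)) =
      \<sigma> * (of_nat (ffact (Suc p) M) - of_nat (ffact p (M - 1)) * of_nat (\<Sum>i<length \<kappa>. \<kappa> ! i - a ! i))"
    by (simp add: last inner sum_negf sum_distrib_left algebra_simps del: of_nat_mult)
  also have "\<dots> = \<sigma> * (of_nat (ffact (Suc p) M) - of_nat (ffact p (M - 1)) * of_nat M)"
    using sum_diff by (auto simp: \<sigma>_def)
  also have "\<dots> = \<sigma> * of_nat (ffact p M)"
    by (cases M) (simp_all add: ffact_Suc_pascal algebra_simps)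
  also have "\<dots> = Pcoeff \<kappa> \<alpha>"
    using ap la by (simp add: Pcoeff_snoc F_def M_def \<sigma>_def)
  finally show ?thesis .
qed

lemma map2_plus_replicate_0: "length \<alpha> = n \<Longrightarrow> map2 (+) \<alpha> (replicate n 0) = (\<alpha> :: nat list)"
  by (induction \<alpha> arbitrary: n) auto

lemma map2_plus_update_Suc:
  "length \<alpha> = length \<gamma> \<Longrightarrow> i < length \<gamma> \<Longrightarrow> map2 (+) \<alpha> (\<gamma>[i := Suc (\<gamma> ! i)]) = map2 (+) (\<alpha>[i := Suc (\<alpha> ! i)]) (\<gamma> :: nat list)"
  by (rule nth_equalityI) (auto simp: nth_list_update)

lemma sum_Delta_it_Pcoeff:
  assumes "length \<alpha> = Suc (length \<kappa>)"
  shows "(\<Sum>\<gamma>\<in>{\<gamma>. (Delta_it (Suc (length \<kappa>)) m \<gamma> :: 'k) \<noteq> 0}.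
            Delta_it (Suc (length \<kappa>)) m \<gamma> * Pcoeff \<kappa> (map2 (+) \<alpha> \<gamma>)) = (Pcoeff \<kappa> \<alpha> :: 'k::field_char_0)"
  using assms
proof (induction m arbitrary: \<alpha>)
  case 0
  then show ?case
    by (simp add: Delta_it_support_exponent_0 Delta_it_exponent_0 map2_plus_replicate_0 del: replicate_Suc)
next
  case (Suc m)
  let ?n = "Suc (length \<kappa>)" and ?S = "{\<gamma>. (Delta_it (Suc (length \<kappa>)) m \<gamma> :: 'k) \<noteq> 0}"
  have "(\<Sum>\<gamma>\<in>{\<gamma>. (Delta_it ?n (Suc m) \<gamma> :: 'k) \<noteq> 0}. (Delta_it ?n (Suc m) \<gamma> :: 'k) * Pcoeff \<kappa> (map2 (+) \<alpha> \<gamma>)) =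
     (\<Sum>i<?n. \<Sum>\<gamma>\<in>?S. (Delta_it ?n m \<gamma> :: 'k) * Pcoeff \<kappa> (map2 (+) \<alpha> (\<gamma>[i := Suc (\<gamma> ! i)])))"
    using sum_Delta_it_Suc_exponent[where h="\<lambda>\<gamma> x. x * Pcoeff \<kappa> (map2 (+) \<alpha> \<gamma>)", OF distrib_right]
    by simp
  also have "\<dots> = (\<Sum>i<?n. \<Sum>\<gamma>\<in>?S. (Delta_it ?n m \<gamma> :: 'k) * Pcoeff \<kappa> (map2 (+) (\<alpha>[i := Suc (\<alpha> ! i)]) \<gamma>))"
  proof (intro sum.cong refl)
    fix i \<gamma> assume "i \<in> {..<?n}" and "\<gamma> \<in> ?S"
    then have "length \<gamma> = ?n" and "i < ?n"
      using Delta_it_nonzeroD by auto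
    then show "(Delta_it ?n m \<gamma> :: 'k) * Pcoeff \<kappa> (map2 (+) \<alpha> (\<gamma>[i := Suc (\<gamma> ! i)])) =
        Delta_it ?n m \<gamma> * Pcoeff \<kappa> (map2 (+) (\<alpha>[i := Suc (\<alpha> ! i)]) \<gamma>)"
      using Suc.prems by (simp add: map2_plus_update_Suc)
  qed
  also have "\<dots> = (\<Sum>i<?n. Pcoeff \<kappa> (\<alpha>[i := Suc (\<alpha> ! i)]))"
    using Suc.prems by (intro sum.cong refl Suc.IH) simp
  also have "\<dots> = Pcoeff \<kappa> \<alpha>"
    by (rule sum_Pcoeff_update_Suc[OF Suc.prems])
  finally show ?case .
qed

lemma Pcoeff_snoc_nonzeroD:
  assumes "length a = length \<kappa>" and "Pcoeff \<kappa> (a @ [p]) \<noteq> 0"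
  shows "list_all2 (\<le>) a \<kappa>" and "sum_list \<kappa> - sum_list a \<le> p"
  using assms prod_ffact_neq_0_iff[of a \<kappa>] by (auto simp: Pcoeff_snoc ffact_pos_iff)

lemma Pcoeff_normal_eq_0:
  assumes "length a = length \<kappa>" and "a \<noteq> \<kappa>"
  shows "Pcoeff \<kappa> (a @ [0]) = 0"
  using Pcoeff_snoc_nonzeroD[OF assms(1)] assms(2) list_all2_le_sum_list_antisym by fastforce

lemma Pcoeff_diag: "Pcoeff \<kappa> (\<kappa> @ [0]) = (-1) ^ sum_list \<kappa> * of_nat (\<Prod>j<length \<kappa>. fact (\<kappa> ! j))"
  by (simp add: Pcoeff_snoc ffact_self)

lemma Pcoeff_diag_neq_0: "(Pcoeff \<kappa> (\<kappa> @ [0]) :: 'k::field_char_0) \<noteq> 0"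
  unfolding Pcoeff_diag by (simp add: prod_zero_iff)

lemma prod_lessThan_add: "(\<Prod>i<(a :: nat) + b. f i) = (\<Prod>i<a. f i) * (\<Prod>i<b. f (a + i))"
  by (induction b) (simp_all add: mult_ac)

lemma Pcoeff_append:
  fixes \<kappa>1 \<kappa>2 a b \<gamma> :: "nat list"
  assumes l1: "length \<kappa>1 = length a" and l2: "length \<kappa>2 = length b" and lg: "length \<gamma> = Suc (length a)"
  shows "Pcoeff (\<kappa>1 @ k # \<kappa>2) (map2 (+) (a @ [p]) \<gamma> @ b @ [q]) =
    (-1) ^ (sum_list a + p + sum_list \<gamma> + sum_list b) *
    of_nat (\<Prod>i<Suc (length a). ffact ((\<kappa>1 @ [k]) ! i) ((a @ [p]) ! i + \<gamma> ! i)) *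
    of_nat (\<Prod>i<length b. ffact (\<kappa>2 ! i) (b ! i)) *
    (of_nat (ffact q (sum_list \<kappa>1 + k + sum_list \<kappa>2 - (sum_list a + p + sum_list \<gamma> + sum_list b)))
      :: 'k::field_char_0)"
proof -
  let ?g = "map2 (+) (a @ [p]) \<gamma>"
  have lg': "length ?g = Suc (length a)"
    using lg by simp
  have "(\<Prod>i<length (\<kappa>1 @ k # \<kappa>2). ffact ((\<kappa>1 @ k # \<kappa>2) ! i) ((?g @ b @ [q]) ! i)) =
      (\<Prod>i<Suc (length a). ffact ((\<kappa>1 @ k # \<kappa>2) ! i) ((?g @ b @ [q]) ! i)) *
      (\<Prod>i<length b. ffact ((\<kappa>1 @ k # \<kappa>2) ! (Suc (length a) + i)) ((?g @ b @ [q]) ! (Suc (length a) + i)))"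
    using l1 l2 prod_lessThan_add[where a="Suc (length a)" and b="length b"] by simp
  also have "\<dots> = (\<Prod>i<Suc (length a). ffact ((\<kappa>1 @ [k]) ! i) ((a @ [p]) ! i + \<gamma> ! i)) *
      (\<Prod>i<length b. ffact (\<kappa>2 ! i) (b ! i))"
    using l1 l2 lg lg' by (intro arg_cong2[where f = "(*)"] prod.cong refl) (auto simp: nth_append less_Suc_eq)
  finally show ?thesis
    using lg by (simp add: Pcoeff_def butlast_append sum_list_map2_plus add.assoc del: of_nat_prod)
qed

lemma prod_binomial_mult_Pcoeff:
  assumes j: "list_all2 (\<le>) j \<kappa>" and la: "length a = length \<kappa>"
  shows "(\<Prod>i<length \<kappa>. of_nat (\<kappa> ! i choose j ! i)) * Pcoeff (map2 (-) \<kappa> j) (a @ [p]) =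
    (-1) ^ sum_list a * of_nat (\<Prod>i<length \<kappa>. ffact (\<kappa> ! i) (a ! i)) *
    of_nat (\<Prod>i<length \<kappa>. (\<kappa> ! i - a ! i) choose j ! i) *
    (of_nat (ffact p (sum_list \<kappa> - sum_list j - sum_list a)) :: 'k::field_char_0)"
proof -
  let ?w = "map2 (-) \<kappa> j"
  have lj: "length j = length \<kappa>"
    using j by (rule list_all2_lengthD)
  have "(\<Prod>i<length \<kappa>. \<kappa> ! i choose j ! i) * (\<Prod>i<length \<kappa>. ffact (?w ! i) (a ! i)) =
      (\<Prod>i<length \<kappa>. ffact (\<kappa> ! i) (a ! i)) * (\<Prod>i<length \<kappa>. (\<kappa> ! i - a ! i) choose j ! i)"
    unfolding prod.distrib[symmetric] using lj by (intro prod.cong refl) (simp add: binomial_mult_ffact)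
  moreover have "(\<Prod>i<length \<kappa>. of_nat (\<kappa> ! i choose j ! i)) * Pcoeff ?w (a @ [p]) =
      (-1) ^ sum_list a * of_nat ((\<Prod>i<length \<kappa>. \<kappa> ! i choose j ! i) * (\<Prod>i<length \<kappa>. ffact (?w ! i) (a ! i))) *
      (of_nat (ffact p (sum_list \<kappa> - sum_list j - sum_list a)) :: 'k)"
    using la lj j by (simp add: Pcoeff_snoc sum_list_map2_minus)
  ultimately show ?thesis
    by (simp only: of_nat_mult mult.assoc)
qed

lemma hpair_antip_monom:
  "hpair (antip (monom 1 k)) b = (if b = k then (-1) ^ k * fact k else (0 :: 'k::field_char_0))"
proof -
  have "[:0, -1:] = (monom (-1) (Suc 0) :: 'k poly)"
    by (simp add: monom_Suc monom_0)
  then show ?thesis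
    unfolding hpair_def antip_def by (simp add: coeff_monom)
qed

lemma prod_hpair_antip_monom:
  assumes "length \<beta> = length \<kappa>"
  shows "(\<Prod>i<length \<kappa>. hpair (antip (monom 1 (\<kappa> ! i))) (\<beta> ! i)) =
    (if \<beta> = \<kappa> then Pcoeff \<kappa> (\<kappa> @ [0]) else (0 :: 'k::field_char_0))"
proof (cases "\<beta> = \<kappa>")
  case True
  then show ?thesis
    by (simp add: hpair_antip_monom Pcoeff_diag prod.distrib power_sum[symmetric] sum_list_eq_sum_lessThan)
next
  case False
  then obtain i where "i < length \<kappa>" "\<beta> ! i \<noteq> \<kappa> ! i"
    using assms by (auto simp: list_eq_iff_nth_eq)
  then show ?thesis
    using False by (auto simp: hpair_antip_monom intro!: prod_zero bexI[of _ i])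
qed

section \<open>Two binomial identities\<close>

lemma coeff_pCons_1_1_power: "coeff ([:1, 1:] ^ n :: 'a::comm_semiring_1 poly) J = of_nat (n choose J)"
proof (induction n arbitrary: J)
  case 0
  then show ?case
    by (cases J) (simp_all add: coeff_1)
next
  case (Suc n)
  have "([:1, 1:] ^ Suc n :: 'a poly) = [:1, 1:] ^ n + pCons 0 ([:1, 1:] ^ n)"
    by (simp add: algebra_simps)
  then show ?case
    using Suc by (cases J) (simp_all add: coeff_pCons add.commute)
qed

lemma pCons_1_1_power_sum_list:
  "list_all2 (\<le>) N M \<Longrightarrow>
   (\<Sum>j\<in>{j. list_all2 (\<le>) j M}. smult (of_nat (\<Prod>i<length M. N ! i choose j ! i)) (monom 1 (sum_list j)))
     = ([:1, 1:] ^ sum_list N :: 'a::comm_semiring_1 poly)"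
proof (induction rule: list_all2_induct)
  case Nil
  then show ?case
    by (simp add: monom_0)
next
  case (Cons n0 N m M)
  have first: "(\<Sum>j0\<le>m. smult (of_nat (n0 choose j0)) (monom 1 j0)) = ([:1, 1:] ^ n0 :: 'a poly)"
  proof (rule poly_eqI)
    fix J
    have "coeff (\<Sum>j0\<le>m. smult (of_nat (n0 choose j0)) (monom (1 :: 'a) j0)) J =
        (\<Sum>j0\<le>m. if J = j0 then of_nat (n0 choose j0) else 0)"
      unfolding coeff_sum by (intro sum.cong refl) (simp add: coeff_monom)
    also have "\<dots> = of_nat (n0 choose J)"
      using \<open>n0 \<le> m\<close> by (subst sum.delta') (auto simp: binomial_eq_0)
    finally show "coeff (\<Sum>j0\<le>m. smult (of_nat (n0 choose j0)) (monom (1 :: 'a) j0)) J = coeff ([:1, 1:] ^ n0) J"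
      by (simp add: coeff_pCons_1_1_power)
  qed
  have "(\<Sum>j\<in>{j. list_all2 (\<le>) j (m # M)}.
      smult (of_nat (\<Prod>i<length (m # M). (n0 # N) ! i choose j ! i)) (monom (1 :: 'a) (sum_list j))) =
      (\<Sum>j0\<le>m. \<Sum>j'\<in>{j. list_all2 (\<le>) j M}. smult (of_nat (n0 choose j0)) (monom (1 :: 'a) j0) *
        smult (of_nat (\<Prod>i<length M. N ! i choose j' ! i)) (monom 1 (sum_list j')))"
    unfolding list_all2_le_Cons_right sum.cartesian_product
    by (subst sum.reindex)
      (auto simp: inj_on_def prod.lessThan_Suc_shift mult_monom mult.commute simp del: prod.lessThan_Suc
        intro!: sum.cong)
  also have "\<dots> = (\<Sum>j0\<le>m. smult (of_nat (n0 choose j0)) (monom (1 :: 'a) j0)) *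
      (\<Sum>j'\<in>{j. list_all2 (\<le>) j M}. smult (of_nat (\<Prod>i<length M. N ! i choose j' ! i)) (monom 1 (sum_list j')))"
    by (simp only: sum_product)
  also have "\<dots> = [:1, 1:] ^ n0 * [:1, 1:] ^ sum_list N"
    unfolding first Cons.IH ..
  finally show ?case
    by (simp add: power_add)
qed

lemma vandermonde_sum_list:
  fixes G :: "nat \<Rightarrow> 'a::comm_semiring_1"
  assumes "list_all2 (\<le>) N M"
  shows "(\<Sum>j\<in>{j. list_all2 (\<le>) j M}. of_nat (\<Prod>i<length M. N ! i choose j ! i) * G (sum_list j))
     = (\<Sum>J\<le>sum_list N. of_nat (sum_list N choose J) * G J)"
proof -
  define \<Phi> where "\<Phi> p = (\<Sum>J\<le>sum_list M. coeff p J * G J)" for p :: "'a poly"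
  let ?c = "\<lambda>j. (of_nat (\<Prod>i<length M. N ! i choose j ! i) :: 'a)"
  have "\<Phi> (\<Sum>j\<in>{j. list_all2 (\<le>) j M}. smult (?c j) (monom 1 (sum_list j))) =
      (\<Sum>J\<le>sum_list M. \<Sum>j\<in>{j. list_all2 (\<le>) j M}. if sum_list j = J then ?c j * G J else 0)"
    unfolding \<Phi>_def coeff_sum sum_distrib_right by (intro sum.cong refl) (simp add: coeff_monom)
  also have "\<dots> = (\<Sum>j\<in>{j. list_all2 (\<le>) j M}. \<Sum>J\<le>sum_list M. if sum_list j = J then ?c j * G J else 0)"
    by (rule sum.swap)
  also have "\<dots> = (\<Sum>j\<in>{j. list_all2 (\<le>) j M}. ?c j * G (sum_list j))"
    by (intro sum.cong refl) (simp add: sum.delta' list_all2_le_sum_list)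
  finally have lhs: "\<Phi> (\<Sum>j\<in>{j. list_all2 (\<le>) j M}. smult (?c j) (monom 1 (sum_list j))) =
      (\<Sum>j\<in>{j. list_all2 (\<le>) j M}. ?c j * G (sum_list j))" .
  have "(\<Sum>j\<in>{j. list_all2 (\<le>) j M}. ?c j * G (sum_list j)) = \<Phi> ([:1, 1:] ^ sum_list N)"
    unfolding lhs[symmetric] pCons_1_1_power_sum_list[OF assms] ..
  also have "\<dots> = (\<Sum>J\<le>sum_list M. of_nat (sum_list N choose J) * G J)"
    unfolding \<Phi>_def by (simp add: coeff_pCons_1_1_power)
  also have "\<dots> = (\<Sum>J\<le>sum_list N. of_nat (sum_list N choose J) * G J)"
    using list_all2_le_sum_list[OF assms] by (intro sum.mono_neutral_right) (auto simp: binomial_eq_0)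
  finally show ?thesis .
qed

lemma sum_binomial_Suc_split:
  "(\<Sum>i\<le>Suc L. of_nat (Suc L choose i) * t i) =
   (\<Sum>i\<le>L. of_nat (L choose i) * t i) + (\<Sum>i\<le>L. of_nat (L choose i) * (t (Suc i) :: 'a::comm_semiring_1))"
proof -
  have "(\<Sum>i\<le>Suc L. of_nat (Suc L choose i) * t i) =
      t 0 + (\<Sum>i\<le>L. of_nat (L choose Suc i) * t (Suc i)) + (\<Sum>i\<le>L. of_nat (L choose i) * t (Suc i))"
    by (subst sum.atMost_Suc_shift) (simp add: sum.distrib algebra_simps)
  also have "t 0 + (\<Sum>i\<le>L. of_nat (L choose Suc i) * t (Suc i)) = (\<Sum>i\<le>Suc L. of_nat (L choose i) * t i)"
    by (subst sum.atMost_Suc_shift) simp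
  also have "\<dots> = (\<Sum>i\<le>L. of_nat (L choose i) * t i)"
    by (simp add: binomial_eq_0)
  finally show ?thesis .
qed

lemma sum_binomial_ffact_alternating:
  "(\<Sum>i\<le>L. of_nat (L choose i) * (of_nat (ffact p i) * (-1) ^ (p - i) * of_nat (ffact (k + L - i) (p - i))))
     = ((-1) ^ p * of_nat (ffact k p) :: 'k::comm_ring_1)"
proof (induction L arbitrary: p k)
  case (Suc L)
  let ?t = "\<lambda>i. (of_nat (ffact p i) * (-1) ^ (p - i) * of_nat (ffact (k + Suc L - i) (p - i)) :: 'k)"
  have unshifted: "(\<Sum>i\<le>L. of_nat (L choose i) * ?t i) = (-1) ^ p * of_nat (ffact (Suc k) p)"
    using Suc.IH[of p "Suc k"] by (simp add: Suc_diff_le)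
  have shifted: "(\<Sum>i\<le>L. of_nat (L choose i) * ?t (Suc i)) =
      (if p = 0 then 0 else of_nat p * ((-1) ^ (p - 1) * of_nat (ffact k (p - 1))))"
  proof (cases p)
    case (Suc p')
    have "(\<Sum>i\<le>L. of_nat (L choose i) * ?t (Suc i)) = of_nat p * (\<Sum>i\<le>L. of_nat (L choose i) *
        (of_nat (ffact p' i) * (-1) ^ (p' - i) * of_nat (ffact (k + L - i) (p' - i))))"
      unfolding sum_distrib_left by (intro sum.cong refl) (simp add: Suc ffact_Suc_Suc algebra_simps)
    then show ?thesis
      using Suc by (simp add: Suc.IH)
  qed (simp add: ffact_eq_0)
  have "(\<Sum>i\<le>Suc L. of_nat (Suc L choose i) * ?t i) =
      (-1) ^ p * of_nat (ffact (Suc k) p) + (if p = 0 then 0 else of_nat p * ((-1) ^ (p - 1) * of_nat (ffact k (p - 1))))"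
    by (simp only: sum_binomial_Suc_split unshifted shifted)
  also have "\<dots> = (-1) ^ p * of_nat (ffact k p)"
  proof (cases p)
    case (Suc p')
    have "(of_nat (ffact (Suc k) (Suc p')) :: 'k) = of_nat (ffact k (Suc p')) + of_nat (Suc p') * of_nat (ffact k p')"
      by (metis ffact_Suc_pascal of_nat_add of_nat_mult)
    then show ?thesis
      using Suc by (simp add: algebra_simps)
  qed simp
  finally show ?case .
qed simp

lemma sum_binomial_ffact_alternating_rev:
  assumes "a \<le> K"
  shows "(\<Sum>J\<le>K - a. of_nat ((K - a) choose J) *
      (of_nat (ffact p (K - J - a)) * (-1) ^ (a + p - (K - J)) * of_nat (ffact (k + J) (a + p - (K - J)))))
    = ((-1) ^ p * of_nat (ffact k p) :: 'k::comm_ring_1)"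
proof -
  define L where "L = K - a"
  let ?G = "\<lambda>J. of_nat (L choose J) *
    (of_nat (ffact p (K - J - a)) * (-1) ^ (a + p - (K - J)) * (of_nat (ffact (k + J) (a + p - (K - J))) :: 'k))"
  have "(\<Sum>J\<le>L. ?G J) = (\<Sum>i\<le>L. ?G (L - i))"
    using sum.atLeastAtMost_rev[of ?G 0 L] by (simp add: atLeast0AtMost)
  also have "\<dots> = (\<Sum>i\<le>L. of_nat (L choose i) * (of_nat (ffact p i) * (-1) ^ (p - i) * of_nat (ffact (k + L - i) (p - i))))"
  proof (intro sum.cong refl)
    fix i assume "i \<in> {..L}"
    then have "K - (L - i) - a = i" "a + p - (K - (L - i)) = p - i" "k + (L - i) = k + L - i"
      "L choose (L - i) = L choose i"
      using assms binomial_symmetric[of i L] unfolding L_def by auto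
    then show "?G (L - i) = of_nat (L choose i) * (of_nat (ffact p i) * (-1) ^ (p - i) * of_nat (ffact (k + L - i) (p - i)))"
      by (simp only:)
  qed
  also have "\<dots> = (-1) ^ p * of_nat (ffact k p)"
    by (rule sum_binomial_ffact_alternating)
  finally show ?thesis
    unfolding L_def .
qed

section \<open>Projections in a conformal algebra\<close>

lemma tens_ok_length: "tens_ok n F \<Longrightarrow> F \<alpha> \<noteq> 0 \<Longrightarrow> length \<alpha> = n"
  by (simp add: tens_ok_def)

lemma tens_ok_sing: "length \<alpha> = n \<Longrightarrow> tens_ok n (sing \<alpha> c)"
  unfolding tens_ok_def sing_def by (auto intro: finite_subset[of _ "{\<alpha>}"])

lemma tens_ok_sum:
  assumes "finite I" and "\<And>i. i \<in> I \<Longrightarrow> tens_ok n (F i :: nat list \<Rightarrow> 'a::comm_monoid_add)"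
  shows "tens_ok n (\<lambda>\<beta>. \<Sum>i\<in>I. F i \<beta>)"
proof -
  have ex: "\<exists>i\<in>I. F i \<beta> \<noteq> 0" if "(\<Sum>i\<in>I. F i \<beta>) \<noteq> 0" for \<beta>
    using that sum.not_neutral_contains_not_neutral by blast
  then have "{\<beta>. (\<Sum>i\<in>I. F i \<beta>) \<noteq> 0} \<subseteq> (\<Union>i\<in>I. {\<beta>. F i \<beta> \<noteq> 0})"
    by blast
  moreover have "finite (\<Union>i\<in>I. {\<beta>. F i \<beta> \<noteq> 0})"
    using assms by (simp add: tens_ok_def)
  moreover have "length \<beta> = n" if "(\<Sum>i\<in>I. F i \<beta>) \<noteq> 0" for \<beta>
    using ex[OF that] assms by (auto simp: tens_ok_def)
  ultimately show ?thesis
    unfolding tens_ok_def by (blast intro: finite_subset)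
qed

lemma tens_ok_diff:
  assumes "tens_ok n F" and "tens_ok n G"
  shows "tens_ok n (\<lambda>\<beta>. F \<beta> - (G \<beta> :: 'a::ab_group_add))"
proof -
  have "F \<beta> \<noteq> 0 \<or> G \<beta> \<noteq> 0" if "F \<beta> - G \<beta> \<noteq> 0" for \<beta>
    using that by auto
  then have "{\<beta>. F \<beta> - G \<beta> \<noteq> 0} \<subseteq> {\<alpha>. F \<alpha> \<noteq> 0} \<union> {\<alpha>. G \<alpha> \<noteq> 0}"
    and "\<forall>\<beta>. F \<beta> - G \<beta> \<noteq> 0 \<longrightarrow> length \<beta> = n"
    using assms by (auto simp: tens_ok_def)
  then show ?thesis
    using assms unfolding tens_ok_def by (meson finite_UnI finite_subset)
qed

definition normal_tens :: "nat \<Rightarrow> (nat list \<Rightarrow> 'c::zero) \<Rightarrow> bool" where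
  "normal_tens n N \<longleftrightarrow> tens_ok n N \<and> (\<forall>\<alpha>. N \<alpha> \<noteq> 0 \<longrightarrow> last \<alpha> = 0)"

lemma normal_tens_sum:
  assumes "finite I" and "\<And>i. i \<in> I \<Longrightarrow> normal_tens n (F i :: nat list \<Rightarrow> 'a::comm_monoid_add)"
  shows "normal_tens n (\<lambda>\<beta>. \<Sum>i\<in>I. F i \<beta>)"
  unfolding normal_tens_def
proof (intro conjI allI impI)
  show "tens_ok n (\<lambda>\<beta>. \<Sum>i\<in>I. F i \<beta>)"
    using assms by (intro tens_ok_sum) (auto simp: normal_tens_def)
  fix \<alpha> assume "(\<Sum>i\<in>I. F i \<alpha>) \<noteq> 0"
  then obtain i where "i \<in> I" "F i \<alpha> \<noteq> 0"
    using sum.not_neutral_contains_not_neutral by blast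
  then show "last \<alpha> = 0"
    using assms(2) by (auto simp: normal_tens_def)
qed

lemma normal_tens_diff:
  assumes "normal_tens n F" and "normal_tens n G"
  shows "normal_tens n (\<lambda>\<beta>. F \<beta> - (G \<beta> :: 'a::ab_group_add))"
proof -
  have "F \<beta> \<noteq> 0 \<or> G \<beta> \<noteq> 0" if "F \<beta> - G \<beta> \<noteq> 0" for \<beta>
    using that by auto
  then show ?thesis
    using assms tens_ok_diff[of n F G] unfolding normal_tens_def by blast
qed

locale conformal_alg =
  fixes sc :: "'k::field_char_0 \<Rightarrow> 'c::ab_group_add \<Rightarrow> 'c"
    and d :: "'c \<Rightarrow> 'c" and pr :: "nat \<Rightarrow> 'c \<Rightarrow> 'c \<Rightarrow> 'c"
  assumes conformal: "conformal_algebra sc d pr"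
begin

sublocale vector_space sc
  using conformal unfolding conformal_algebra_def by blast

lemma pr_D_left: "pr j (d a) b = - sc (of_nat j) (pr (j - 1) a b)"
  using conformal unfolding conformal_algebra_def by blast

lemma pr_D_right: "pr j a (d b) = d (pr j a b) + sc (of_nat j) (pr (j - 1) a b)"
  using conformal unfolding conformal_algebra_def by blast

lemma pr_eventually_0: "\<exists>N. \<forall>j\<ge>N. pr j a b = 0"
  using conformal unfolding conformal_algebra_def by blast

lemma module_hom_Dpow: "module_hom sc sc (d ^^ e)"
proof (induction e)
  case 0
  then show ?case
    by (simp add: module_hom_iff_linear linear_ident)
next
  case (Suc e)
  moreover have "module_hom sc sc d"
    using conformal by (simp add: conformal_algebra_def module_hom_iff_linear)
  ultimately show ?case
    using module_hom_compose by (simp add: comp_def)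
qed

lemma module_hom_pr_right: "module_hom sc sc (pr j a)"
  using conformal by (simp add: conformal_algebra_def module_hom_iff_linear)

lemma module_hom_pr_left: "module_hom sc sc (\<lambda>a. pr j a b)"
  using conformal by (simp add: conformal_algebra_def module_hom_iff_linear)

lemmas Dpow_add = module_hom.add[OF module_hom_Dpow]
  and Dpow_diff = module_hom.diff[OF module_hom_Dpow]
  and Dpow_scale = module_hom.scale[OF module_hom_Dpow]
  and Dpow_zero [simp] = module_hom.zero[OF module_hom_Dpow]
  and pr_scale_right = module_hom.scale[OF module_hom_pr_right]
  and pr_sum_right = module_hom.sum[OF module_hom_pr_right]
  and pr_zero_right [simp] = module_hom.zero[OF module_hom_pr_right]
  and pr_scale_left = module_hom.scale[OF module_hom_pr_left, simplified]
  and pr_sum_left = module_hom.sum[OF module_hom_pr_left, simplified]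

definition Pmono :: "nat list \<Rightarrow> (nat list \<Rightarrow> 'c) \<Rightarrow> 'c" where
  "Pmono \<kappa> R = (\<Sum>\<alpha>\<in>{\<alpha>. R \<alpha> \<noteq> 0}. sc (Pcoeff \<kappa> \<alpha>) ((d ^^ (sum_list \<alpha> - sum_list \<kappa>)) (R \<alpha>)))"

lemma Pmono_superset:
  "finite S \<Longrightarrow> {\<alpha>. R \<alpha> \<noteq> 0} \<subseteq> S \<Longrightarrow>
   Pmono \<kappa> R = (\<Sum>\<alpha>\<in>S. sc (Pcoeff \<kappa> \<alpha>) ((d ^^ (sum_list \<alpha> - sum_list \<kappa>)) (R \<alpha>)))"
  unfolding Pmono_def by (rule sum.mono_neutral_left) auto

lemma Pmono_add:
  assumes "tens_ok n F" and "tens_ok m G"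
  shows "Pmono \<kappa> (\<lambda>\<beta>. F \<beta> + G \<beta>) = Pmono \<kappa> F + Pmono \<kappa> G"
proof -
  have fin: "finite ({\<alpha>. F \<alpha> \<noteq> 0} \<union> {\<alpha>. G \<alpha> \<noteq> 0})"
    using assms by (simp add: tens_ok_def)
  show ?thesis
    by (subst (1 2 3) Pmono_superset[OF fin]) (auto simp: Dpow_add scale_right_distrib sum.distrib)
qed

lemma Pmono_diff:
  assumes "tens_ok n F" and "tens_ok m G"
  shows "Pmono \<kappa> (\<lambda>\<beta>. F \<beta> - G \<beta>) = Pmono \<kappa> F - Pmono \<kappa> G"
proof -
  have fin: "finite ({\<alpha>. F \<alpha> \<noteq> 0} \<union> {\<alpha>. G \<alpha> \<noteq> 0})"
    using assms by (simp add: tens_ok_def)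
  show ?thesis
    by (subst (1 2 3) Pmono_superset[OF fin]) (auto simp: Dpow_diff scale_right_diff_distrib sum_subtractf)
qed

lemma Pmono_scale: "tens_ok n F \<Longrightarrow> Pmono \<kappa> (\<lambda>\<beta>. sc r (F \<beta>)) = sc r (Pmono \<kappa> F)"
  by (subst (1 2) Pmono_superset[where S="{\<alpha>. F \<alpha> \<noteq> 0}"])
    (auto simp: tens_ok_def Dpow_scale scale_sum_right mult.commute)

lemma Pmono_sum:
  "finite I \<Longrightarrow> (\<And>i. i \<in> I \<Longrightarrow> tens_ok n (F i)) \<Longrightarrow>
    Pmono \<kappa> (\<lambda>\<beta>. \<Sum>i\<in>I. F i \<beta>) = (\<Sum>i\<in>I. Pmono \<kappa> (F i))"
proof (induction I rule: finite_induct)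
  case (insert x I)
  then have "Pmono \<kappa> (\<lambda>\<beta>. F x \<beta> + (\<Sum>i\<in>I. F i \<beta>)) = Pmono \<kappa> (F x) + Pmono \<kappa> (\<lambda>\<beta>. \<Sum>i\<in>I. F i \<beta>)"
    by (intro Pmono_add tens_ok_sum) auto
  with insert show ?case
    by simp
qed (simp add: Pmono_def)

lemma Pmono_sing: "Pmono \<kappa> (sing \<alpha> c) = sc (Pcoeff \<kappa> \<alpha>) ((d ^^ (sum_list \<alpha> - sum_list \<kappa>)) c)"
  by (subst Pmono_superset[of "{\<alpha>}"]) (auto simp: sing_def)

lemma tens_ok_sum_Delta_it:
  assumes "length \<alpha> = n"
  shows "tens_ok n (\<lambda>\<beta>. \<Sum>\<gamma>\<in>{\<gamma>. (Delta_it n m \<gamma> :: 'k) \<noteq> 0}. sing (map2 (+) \<alpha> \<gamma>) (sc (Delta_it n m \<gamma>) c) \<beta>)"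
proof (intro tens_ok_sum tens_ok_sing)
  fix \<gamma> assume "\<gamma> \<in> {\<gamma>. (Delta_it n m \<gamma> :: 'k) \<noteq> 0}"
  then have "length \<gamma> = n"
    using Delta_it_nonzeroD by blast
  then show "length (map2 (+) \<alpha> \<gamma>) = n"
    using assms by simp
qed simp

lemma relsp_tens_ok: "F \<in> relsp sc d n \<Longrightarrow> tens_ok n F"
proof (induction rule: relsp.induct)
  case (gen \<alpha> m c)
  then have "tens_ok n (\<lambda>\<beta>. \<Sum>\<gamma>\<in>{\<gamma>. (Delta_it n m \<gamma> :: 'k) \<noteq> 0}. sing (map2 (+) \<alpha> \<gamma>) (sc (Delta_it n m \<gamma>) c) \<beta>)"
    by (rule tens_ok_sum_Delta_it)
  then show ?case
    using tens_ok_diff tens_ok_sing gen by blast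
next
  case (add F G)
  then show ?case
    using tens_ok_sum[of "{True, False}" n "\<lambda>b. if b then F else G"] by simp
next
  case (scale F r)
  then show ?case
    unfolding tens_ok_def by (auto intro: finite_subset[of _ "{\<alpha>. F \<alpha> \<noteq> 0}"])
qed (simp add: tens_ok_def)

lemma Pmono_relsp_eq_0: "F \<in> relsp sc d n \<Longrightarrow> n = Suc (length \<kappa>) \<Longrightarrow> Pmono \<kappa> F = 0"
proof (induction rule: relsp.induct)
  case (gen \<alpha> m c)
  let ?G = "{\<gamma>. (Delta_it n m \<gamma> :: 'k) \<noteq> 0}" and ?e = "sum_list \<alpha> + m - sum_list \<kappa>"
  have "Pmono \<kappa> (\<lambda>\<beta>. \<Sum>\<gamma>\<in>?G. sing (map2 (+) \<alpha> \<gamma>) (sc (Delta_it n m \<gamma>) c) \<beta>) =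
      (\<Sum>\<gamma>\<in>?G. Pmono \<kappa> (sing (map2 (+) \<alpha> \<gamma>) (sc (Delta_it n m \<gamma>) c)))"
    using gen(1) by (intro Pmono_sum[where n=n] tens_ok_sing) (auto dest: Delta_it_nonzeroD)
  also have "\<dots> = (\<Sum>\<gamma>\<in>?G. sc (Delta_it n m \<gamma> * Pcoeff \<kappa> (map2 (+) \<alpha> \<gamma>)) ((d ^^ ?e) c))"
  proof (rule sum.cong[OF refl])
    fix \<gamma> assume "\<gamma> \<in> ?G"
    then have "sum_list (map2 (+) \<alpha> \<gamma>) = sum_list \<alpha> + m"
      using gen(1) Delta_it_nonzeroD by (fastforce simp: sum_list_map2_plus)
    then show "Pmono \<kappa> (sing (map2 (+) \<alpha> \<gamma>) (sc (Delta_it n m \<gamma>) c)) =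
        sc (Delta_it n m \<gamma> * Pcoeff \<kappa> (map2 (+) \<alpha> \<gamma>)) ((d ^^ ?e) c)"
      by (simp add: Pmono_sing Dpow_scale mult.commute)
  qed
  also have "\<dots> = sc (Pcoeff \<kappa> \<alpha>) ((d ^^ ?e) c)"
    using gen by (simp add: sum_Delta_it_Pcoeff scale_sum_left[symmetric])
  also have "\<dots> = Pmono \<kappa> (sing \<alpha> ((d ^^ m) c))"
  proof (cases "Pcoeff \<kappa> \<alpha> = (0 :: 'k)")
    case False
    then have "?e = (sum_list \<alpha> - sum_list \<kappa>) + m"
      using Pcoeff_eq_0_if_sum_less[of \<alpha> \<kappa>] gen by fastforce
    then show ?thesis
      by (simp add: Pmono_sing funpow_add)
  qed (simp add: Pmono_sing)
  moreover have "tens_ok n (\<lambda>\<beta>. \<Sum>\<gamma>\<in>?G. sing (map2 (+) \<alpha> \<gamma>) (sc (Delta_it n m \<gamma>) c) \<beta>)"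
    using gen(1) by (rule tens_ok_sum_Delta_it)
  ultimately show ?case
    using gen(1) by (simp add: Pmono_diff[where m=n] tens_ok_sing)
next
  case (add F G)
  then show ?case
    by (simp add: Pmono_add[OF relsp_tens_ok relsp_tens_ok])
next
  case (scale F r)
  then show ?case
    by (simp add: Pmono_scale[OF relsp_tens_ok])
qed (simp add: Pmono_def)

lemma relsp_diff: "F \<in> relsp sc d n \<Longrightarrow> G \<in> relsp sc d n \<Longrightarrow> (\<lambda>\<beta>. F \<beta> - G \<beta>) \<in> relsp sc d n"
  using relsp.add[OF _ relsp.scale, of F sc d n G "-1"] by simp

lemma relsp_sum:
  "finite I \<Longrightarrow> (\<And>i. i \<in> I \<Longrightarrow> F i \<in> relsp sc d n) \<Longrightarrow> (\<lambda>\<beta>. \<Sum>i\<in>I. F i \<beta>) \<in> relsp sc d n"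
proof (induction I rule: finite_induct)
  case (insert x I)
  then show ?case
    using relsp.add[of "F x" sc d n "\<lambda>\<beta>. \<Sum>i\<in>I. F i \<beta>"] by simp
qed (simp add: relsp.zero)

lemma Pmono_normal:
  assumes N: "normal_tens (Suc (length \<kappa>)) N"
  shows "Pmono \<kappa> N = sc (Pcoeff \<kappa> (\<kappa> @ [0])) (N (\<kappa> @ [0]))"
proof -
  let ?S = "{\<alpha>. N \<alpha> \<noteq> 0} \<union> {\<kappa> @ [0]}"
  have fS: "finite ?S"
    using N by (simp add: normal_tens_def tens_ok_def)
  have "Pcoeff \<kappa> \<alpha> = (0 :: 'k)" if "\<alpha> \<in> ?S - {\<kappa> @ [0]}" for \<alpha>
  proof -
    have "length \<alpha> = Suc (length \<kappa>)" and "last \<alpha> = 0"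
      using that N by (auto simp: normal_tens_def tens_ok_def)
    then obtain a where "\<alpha> = a @ [0]" and "length a = length \<kappa>"
      by (cases \<alpha> rule: rev_cases) auto
    then show ?thesis
      using that Pcoeff_normal_eq_0 by auto
  qed
  then have "Pmono \<kappa> N = (\<Sum>\<alpha>\<in>{\<kappa> @ [0]}. sc (Pcoeff \<kappa> \<alpha>) ((d ^^ (sum_list \<alpha> - sum_list \<kappa>)) (N \<alpha>)))"
    unfolding Pmono_superset[OF fS Un_upper1] by (intro sum.mono_neutral_right[OF fS]) auto
  then show ?thesis
    by simp
qed

lemma normal_tens_unique:
  assumes N1: "normal_tens (Suc r) N1" and N2: "normal_tens (Suc r) N2"
    and R: "(\<lambda>\<beta>. N1 \<beta> - N2 \<beta>) \<in> relsp sc d (Suc r)"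
  shows "N1 = N2"
proof
  fix \<alpha>
  have diag: "N1 (\<kappa> @ [0]) = N2 (\<kappa> @ [0])" if "length \<kappa> = r" for \<kappa>
  proof -
    have "Pmono \<kappa> N1 = Pmono \<kappa> N2"
      using Pmono_relsp_eq_0[OF R] Pmono_diff[of "Suc r" N1 "Suc r" N2] N1 N2 that
      by (simp add: normal_tens_def)
    then have "sc (Pcoeff \<kappa> (\<kappa> @ [0])) (N1 (\<kappa> @ [0])) = sc (Pcoeff \<kappa> (\<kappa> @ [0])) (N2 (\<kappa> @ [0]))"
      using N1 N2 that by (simp add: Pmono_normal)
    then show ?thesis
      by (metis Pcoeff_diag_neq_0 scale_cancel_left)
  qed
  show "N1 \<alpha> = N2 \<alpha>"
  proof (cases "N1 \<alpha> = 0 \<and> N2 \<alpha> = 0")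
    case False
    then have "length \<alpha> = Suc r" and "last \<alpha> = 0"
      using N1 N2 by (auto simp: normal_tens_def tens_ok_def)
    then obtain \<kappa> where "\<alpha> = \<kappa> @ [0]" "length \<kappa> = r"
      by (cases \<alpha> rule: rev_cases) auto
    then show ?thesis
      using diag by simp
  qed simp
qed

lemma relsp_Delta_D:
  assumes "length \<alpha> = Suc r"
  shows "(\<lambda>\<beta>. (\<Sum>i<Suc r. sing (\<alpha>[i := Suc (\<alpha> ! i)]) c \<beta>) - sing \<alpha> (d c) \<beta>) \<in> relsp sc d (Suc r)"
proof -
  have "(\<Sum>\<gamma>\<in>{\<gamma>. (Delta_it (Suc r) (Suc 0) \<gamma> :: 'k) \<noteq> 0}. sing (map2 (+) \<alpha> \<gamma>) (sc (Delta_it (Suc r) (Suc 0) \<gamma>) c) \<beta>)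
      = (\<Sum>i<Suc r. sing (\<alpha>[i := Suc (\<alpha> ! i)]) c \<beta>)" for \<beta>
  proof -
    have "(\<Sum>\<gamma>\<in>{\<gamma>. (Delta_it (Suc r) (Suc 0) \<gamma> :: 'k) \<noteq> 0}. sing (map2 (+) \<alpha> \<gamma>) (sc (Delta_it (Suc r) (Suc 0) \<gamma>) c) \<beta>)
      = (\<Sum>i<Suc r. \<Sum>\<gamma>\<in>{\<gamma>. (Delta_it (Suc r) 0 \<gamma> :: 'k) \<noteq> 0}.
          sing (map2 (+) \<alpha> (\<gamma>[i := Suc (\<gamma> ! i)])) (sc (Delta_it (Suc r) 0 \<gamma>) c) \<beta>)"
      by (rule sum_Delta_it_Suc_exponent) (simp add: sing_def scale_left_distrib)
    also have "\<dots> = (\<Sum>i<Suc r. sing (\<alpha>[i := Suc (\<alpha> ! i)]) c \<beta>)"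
    proof (intro sum.cong refl)
      fix i assume i: "i \<in> {..<Suc r}"
      then have "map2 (+) \<alpha> ((replicate (Suc r) 0)[i := Suc 0]) = \<alpha>[i := Suc (\<alpha> ! i)]"
        using assms by (intro nth_equalityI) (auto simp: nth_list_update simp del: replicate_Suc)
      then show "(\<Sum>\<gamma>\<in>{\<gamma>. (Delta_it (Suc r) 0 \<gamma> :: 'k) \<noteq> 0}.
          sing (map2 (+) \<alpha> (\<gamma>[i := Suc (\<gamma> ! i)])) (sc (Delta_it (Suc r) 0 \<gamma>) c) \<beta>) =
          sing (\<alpha>[i := Suc (\<alpha> ! i)]) c \<beta>"
        using i by (simp add: Delta_it_support_exponent_0 Delta_it_exponent_0 del: replicate_Suc)
    qed
    finally show ?thesis .
  qed
  then show ?thesis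
    using relsp.gen[OF assms, where m="Suc 0" and c=c and sc=sc and d=d] by simp
qed

lemma exists_normal_tens_sing:
  "length a = r \<Longrightarrow> \<exists>N. normal_tens (Suc r) N \<and> (\<lambda>\<beta>. sing (a @ [p]) c \<beta> - N \<beta>) \<in> relsp sc d (Suc r)"
proof (induction p arbitrary: a c)
  case 0
  then have "normal_tens (Suc r) (sing (a @ [0]) c)"
    using tens_ok_sing[of "a @ [0]" "Suc r" c] by (simp add: normal_tens_def sing_def)
  then show ?case
    using relsp.zero by fastforce
next
  case (Suc p)
  let ?\<alpha> = "a @ [p]"
  obtain N0 where N0: "normal_tens (Suc r) N0" "(\<lambda>\<beta>. sing ?\<alpha> (d c) \<beta> - N0 \<beta>) \<in> relsp sc d (Suc r)"
    using Suc.IH[OF Suc.prems, of "d c"] by (elim exE conjE)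
  have "\<forall>i\<in>{..<r}. \<exists>N. normal_tens (Suc r) N \<and>
      (\<lambda>\<beta>. sing (a[i := Suc (a ! i)] @ [p]) c \<beta> - N \<beta>) \<in> relsp sc d (Suc r)"
    using Suc.IH Suc.prems by simp
  then obtain NI where NI: "\<forall>i\<in>{..<r}. normal_tens (Suc r) (NI i) \<and>
      (\<lambda>\<beta>. sing (a[i := Suc (a ! i)] @ [p]) c \<beta> - NI i \<beta>) \<in> relsp sc d (Suc r)"
    by (rule bchoice[THEN exE])
  define N where "N \<beta> = N0 \<beta> - (\<Sum>i<r. NI i \<beta>)" for \<beta>
  have "normal_tens (Suc r) N"
    unfolding N_def by (rule normal_tens_diff[OF N0(1) normal_tens_sum]) (use NI in auto)
  moreover have "(\<lambda>\<beta>. sing (a @ [Suc p]) c \<beta> - N \<beta>) \<in> relsp sc d (Suc r)"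
  proof -
    have "(\<lambda>\<beta>. ((\<Sum>i<Suc r. sing (?\<alpha>[i := Suc (?\<alpha> ! i)]) c \<beta>) - sing ?\<alpha> (d c) \<beta>)
        + (sing ?\<alpha> (d c) \<beta> - N0 \<beta>) - (\<Sum>i<r. sing (a[i := Suc (a ! i)] @ [p]) c \<beta> - NI i \<beta>))
      \<in> relsp sc d (Suc r)"
    proof (rule relsp_diff[OF relsp.add[OF relsp_Delta_D N0(2)] relsp_sum])
      show "length ?\<alpha> = Suc r"
        using Suc.prems by simp
    qed (use NI in auto)
    moreover have "(\<Sum>i<Suc r. sing (?\<alpha>[i := Suc (?\<alpha> ! i)]) c \<beta>) =
        (\<Sum>i<r. sing (a[i := Suc (a ! i)] @ [p]) c \<beta>) + sing (a @ [Suc p]) c \<beta>" for \<beta>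
      using Suc.prems by (simp add: list_update_append nth_append)
    ultimately show ?thesis
      unfolding N_def by (simp add: sum_subtractf algebra_simps del: list_update_append)
  qed
  ultimately have "normal_tens (Suc r) N \<and> (\<lambda>\<beta>. sing (a @ [Suc p]) c \<beta> - N \<beta>) \<in> relsp sc d (Suc r)"
    by (rule conjI)
  then show ?case
    by (rule exI[of _ N])
qed

lemma exists_normal_tens:
  assumes R: "tens_ok (Suc r) R"
  shows "\<exists>N. normal_tens (Suc r) N \<and> (\<lambda>\<beta>. R \<beta> - N \<beta>) \<in> relsp sc d (Suc r)"
proof -
  let ?S = "{\<alpha>. R \<alpha> \<noteq> 0}"
  have fS: "finite ?S"
    using R by (simp add: tens_ok_def)
  have "\<forall>\<alpha>\<in>?S. \<exists>N. normal_tens (Suc r) N \<and> (\<lambda>\<beta>. sing \<alpha> (R \<alpha>) \<beta> - N \<beta>) \<in> relsp sc d (Suc r)"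
  proof
    fix \<alpha> assume "\<alpha> \<in> ?S"
    then have "length \<alpha> = Suc r"
      using R by (simp add: tens_ok_def)
    then obtain a p where "\<alpha> = a @ [p]" "length a = r"
      by (cases \<alpha> rule: rev_cases) auto
    then show "\<exists>N. normal_tens (Suc r) N \<and> (\<lambda>\<beta>. sing \<alpha> (R \<alpha>) \<beta> - N \<beta>) \<in> relsp sc d (Suc r)"
      using exists_normal_tens_sing by simp
  qed
  then obtain NA where NA: "\<forall>\<alpha>\<in>?S.
      normal_tens (Suc r) (NA \<alpha>) \<and> (\<lambda>\<beta>. sing \<alpha> (R \<alpha>) \<beta> - NA \<alpha> \<beta>) \<in> relsp sc d (Suc r)"
    by (rule bchoice[THEN exE])
  define N where "N \<beta> = (\<Sum>\<alpha>\<in>?S. NA \<alpha> \<beta>)" for \<beta>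
  have "normal_tens (Suc r) N"
    unfolding N_def by (rule normal_tens_sum[OF fS]) (use NA in auto)
  moreover have "(\<lambda>\<beta>. R \<beta> - N \<beta>) \<in> relsp sc d (Suc r)"
  proof -
    have "(\<lambda>\<beta>. \<Sum>\<alpha>\<in>?S. sing \<alpha> (R \<alpha>) \<beta> - NA \<alpha> \<beta>) \<in> relsp sc d (Suc r)"
      by (rule relsp_sum[OF fS]) (use NA in auto)
    moreover have "(\<Sum>\<alpha>\<in>?S. sing \<alpha> (R \<alpha>) \<beta>) = R \<beta>" for \<beta>
    proof (cases "R \<beta> = 0")
      case True
      then show ?thesis
        by (auto simp: sing_def intro!: sum.neutral)
    qed (use fS in \<open>simp add: sing_def sum.delta'\<close>)
    ultimately show ?thesis
      by (simp add: N_def sum_subtractf)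
  qed
  ultimately have "normal_tens (Suc r) N \<and> (\<lambda>\<beta>. R \<beta> - N \<beta>) \<in> relsp sc d (Suc r)"
    by (rule conjI)
  then show ?thesis
    by (rule exI[of _ N])
qed

lemma theta_normal_tens:
  assumes "normal_tens (Suc r) N" and "(\<lambda>\<beta>. R \<beta> - N \<beta>) \<in> relsp sc d (Suc r)"
  shows "theta sc d (Suc r) R = (\<lambda>\<beta>. N (\<beta> @ [0]))"
proof -
  have "(THE N. tens_ok (Suc r) N \<and> (\<forall>\<alpha>. N \<alpha> \<noteq> 0 \<longrightarrow> last \<alpha> = 0) \<and>
      (\<lambda>\<beta>. R \<beta> - N \<beta>) \<in> relsp sc d (Suc r)) = N"
  proof (rule the_equality)
    fix N' assume N': "tens_ok (Suc r) N' \<and> (\<forall>\<alpha>. N' \<alpha> \<noteq> 0 \<longrightarrow> last \<alpha> = 0) \<and>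
      (\<lambda>\<beta>. R \<beta> - N' \<beta>) \<in> relsp sc d (Suc r)"
    then have "(\<lambda>\<beta>. (R \<beta> - N \<beta>) - (R \<beta> - N' \<beta>)) \<in> relsp sc d (Suc r)"
      using relsp_diff assms(2) by blast
    then show "N' = N"
      using normal_tens_unique[of r N' N] assms(1) N' by (simp add: normal_tens_def)
  qed (use assms in \<open>simp add: normal_tens_def\<close>)
  then show ?thesis
    unfolding theta_def by simp
qed

lemma Pmap_eq_sum_Pmono:
  assumes R: "tens_ok (Suc r) R" and X: "tens_ok r X"
  shows "Pmap sc d (Suc r) X R = (\<Sum>\<kappa>\<in>{\<kappa>. X \<kappa> \<noteq> 0}. sc (X \<kappa>) (Pmono \<kappa> R))"
proof -
  obtain N where N: "normal_tens (Suc r) N" and RN: "(\<lambda>\<beta>. R \<beta> - N \<beta>) \<in> relsp sc d (Suc r)"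
    using exists_normal_tens[OF R] by blast
  have fin: "finite {\<beta>. N (\<beta> @ [0]) \<noteq> 0}"
    using N unfolding normal_tens_def tens_ok_def
    by (intro finite_vimageI[where h="\<lambda>\<beta>. \<beta> @ [0]" and F="{\<alpha>. N \<alpha> \<noteq> 0}", unfolded vimage_def, simplified])
      (auto simp: inj_on_def)
  have term_eq: "(\<Sum>\<beta>\<in>{\<beta>. N (\<beta> @ [0]) \<noteq> 0}. sc (X \<kappa> * (\<Prod>i<Suc r - 1. hpair (antip (monom 1 (\<kappa> ! i))) (\<beta> ! i)))
      (N (\<beta> @ [0]))) = sc (X \<kappa>) (Pmono \<kappa> R)" if "X \<kappa> \<noteq> 0" for \<kappa>
  proof -
    have l: "length \<kappa> = r"
      using that X by (simp add: tens_ok_def)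
    have "(\<Sum>\<beta>\<in>{\<beta>. N (\<beta> @ [0]) \<noteq> 0}.
        sc (X \<kappa> * (\<Prod>i<Suc r - 1. hpair (antip (monom 1 (\<kappa> ! i))) (\<beta> ! i))) (N (\<beta> @ [0]))) =
        (\<Sum>\<beta>\<in>{\<beta>. N (\<beta> @ [0]) \<noteq> 0}. if \<beta> = \<kappa> then sc (X \<kappa> * Pcoeff \<kappa> (\<kappa> @ [0])) (N (\<kappa> @ [0])) else 0)"
    proof (intro sum.cong refl)
      fix \<beta> assume "\<beta> \<in> {\<beta>. N (\<beta> @ [0]) \<noteq> 0}"
      then have "length (\<beta> @ [0]) = Suc r"
        using N tens_ok_length unfolding normal_tens_def by blast
      then have "(\<Prod>i<Suc r - 1. hpair (antip (monom 1 (\<kappa> ! i))) (\<beta> ! i)) =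
          (if \<beta> = \<kappa> then Pcoeff \<kappa> (\<kappa> @ [0]) else (0 :: 'k))"
        using prod_hpair_antip_monom[of \<beta> \<kappa>] l by simp
      then show "sc (X \<kappa> * (\<Prod>i<Suc r - 1. hpair (antip (monom 1 (\<kappa> ! i))) (\<beta> ! i))) (N (\<beta> @ [0])) =
          (if \<beta> = \<kappa> then sc (X \<kappa> * Pcoeff \<kappa> (\<kappa> @ [0])) (N (\<kappa> @ [0])) else 0)"
        by (cases "\<beta> = \<kappa>") simp_all
    qed
    also have "\<dots> = sc (X \<kappa>) (sc (Pcoeff \<kappa> (\<kappa> @ [0])) (N (\<kappa> @ [0])))"
      using fin by (simp add: sum.delta')
    also have "sc (Pcoeff \<kappa> (\<kappa> @ [0])) (N (\<kappa> @ [0])) = Pmono \<kappa> R"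
      using Pmono_relsp_eq_0[OF RN] Pmono_diff[OF R, of "Suc r" N] N l
      by (simp add: normal_tens_def Pmono_normal)
    finally show ?thesis .
  qed
  show ?thesis
    unfolding Pmap_def theta_normal_tens[OF N RN] Let_def by (rule sum.cong[OF refl]) (rule term_eq, simp)
qed

lemma Pmap_sing_eq_Pmono:
  assumes "tens_ok (Suc (length w)) A"
  shows "Pmap sc d (Suc (length w)) (sing w 1) A = Pmono w A"
proof -
  have "Pmap sc d (Suc (length w)) (sing w 1) A = (\<Sum>\<kappa>\<in>{\<kappa>. sing w (1 :: 'k) \<kappa> \<noteq> 0}. sc (sing w 1 \<kappa>) (Pmono \<kappa> A))"
    by (rule Pmap_eq_sum_Pmono[OF assms tens_ok_sing]) simp
  also have "{\<kappa>. sing w (1 :: 'k) \<kappa> \<noteq> 0} = {w}"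
    by (auto simp: sing_def)
  finally show ?thesis
    by (simp add: sing_def)
qed

section \<open>The expanded pseudoproduct\<close>

definition pr_bound :: "'c \<Rightarrow> 'c \<Rightarrow> nat" where
  "pr_bound a b = (SOME N. \<forall>j\<ge>N. pr j a b = 0)"

lemma pr_beyond_bound: "pr_bound a b \<le> j \<Longrightarrow> pr j a b = 0"
  using someI_ex[OF pr_eventually_0[of a b]] unfolding pr_bound_def by blast

lemma pseudo_nonzeroD: "pseudo sc pr a b \<rho> \<noteq> 0 \<Longrightarrow> \<exists>s<pr_bound a b. \<rho> = [s, 0]"
  unfolding pseudo_def using pr_beyond_bound not_le
  by (fastforce split: list.splits if_splits)

lemma pseudo_Cons_0: "pseudo sc pr a b [s, 0] = sc ((-1) ^ s / fact s) (pr s a b)"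
  unfolding pseudo_def by simp

lemma normal_tens_pseudo: "normal_tens 2 (pseudo sc pr a b)"
proof -
  have "{\<rho>. pseudo sc pr a b \<rho> \<noteq> 0} \<subseteq> (\<lambda>s. [s, 0]) ` {..<pr_bound a b}"
    using pseudo_nonzeroD by blast
  then have "finite {\<rho>. pseudo sc pr a b \<rho> \<noteq> 0}"
    by (rule finite_subset) simp
  then show ?thesis
    unfolding normal_tens_def tens_ok_def using pseudo_nonzeroD by fastforce
qed

lemma Pmono_pseudo: "Pmono [K] (pseudo sc pr a b) = pr K a b"
proof -
  have "Pmono [K] (pseudo sc pr a b) = sc (Pcoeff [K] [K, 0]) (pseudo sc pr a b [K, 0])"
    using Pmono_normal[of "[K]" "pseudo sc pr a b"] normal_tens_pseudo by (simp add: numeral_2_eq_2)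
  also have "\<dots> = pr K a b"
    by (simp add: pseudo_Cons_0 Pcoeff_diag[of "[K]", simplified])
  finally show ?thesis .
qed

lemma Pmap_pseudo:
  "Pmap sc d 2 (poly1 w) (pseudo sc pr a b) = (\<Sum>K\<in>{K. coeff w K \<noteq> 0}. sc (coeff w K) (pr K a b))"
proof -
  have S: "{\<kappa>. poly1 w \<kappa> \<noteq> 0} = (\<lambda>K. [K]) ` {K. coeff w K \<noteq> 0}"
  proof (rule set_eqI)
    fix \<kappa> :: "nat list"
    show "\<kappa> \<in> {\<kappa>. poly1 w \<kappa> \<noteq> 0} \<longleftrightarrow> \<kappa> \<in> (\<lambda>K. [K]) ` {K. coeff w K \<noteq> 0}"
      by (cases \<kappa> rule: remdups_adj.cases) (auto simp: poly1_def)
  qed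
  have "finite {K. coeff w K \<noteq> 0}"
    by (rule finite_subset[of _ "{..degree w}"]) (auto intro: le_degree)
  then have "tens_ok 1 (poly1 w)"
    unfolding tens_ok_def S by (auto simp: poly1_def split: list.splits)
  moreover have "tens_ok (Suc 1) (pseudo sc pr a b)"
    using normal_tens_pseudo by (simp add: normal_tens_def numeral_2_eq_2)
  ultimately have "Pmap sc d (Suc 1) (poly1 w) (pseudo sc pr a b) =
      (\<Sum>\<kappa>\<in>{\<kappa>. poly1 w \<kappa> \<noteq> 0}. sc (poly1 w \<kappa>) (Pmono \<kappa> (pseudo sc pr a b)))"
    by (intro Pmap_eq_sum_Pmono)
  also have "\<dots> = (\<Sum>K\<in>{K. coeff w K \<noteq> 0}. sc (coeff w K) (pr K a b))"
    unfolding S by (subst sum.reindex) (auto simp: inj_on_def poly1_def Pmono_pseudo)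
  finally show ?thesis
    by (simp add: numeral_2_eq_2)
qed

text \<open>The expanded pseudoproduct of \<open>D^\<alpha> \<otimes>_H a\<close> and \<open>D^\<beta> \<otimes>_H b\<close>: only the factor \<open>(-D)^s/s!\<close>
  of \<open>a * b\<close> has to be expanded by the coproduct, the factor \<open>1\<close> just leaves \<open>D^\<beta>\<close>.\<close>

definition EP_mono :: "nat list \<Rightarrow> 'c \<Rightarrow> nat list \<Rightarrow> 'c \<Rightarrow> nat list \<Rightarrow> 'c" where
  "EP_mono \<alpha> a \<beta> b = (\<lambda>\<omega>. \<Sum>s<pr_bound a b. \<Sum>\<gamma>\<in>{\<gamma>. (Delta_it (length \<alpha>) s \<gamma> :: 'k) \<noteq> 0}.
      sing (map2 (+) \<alpha> \<gamma> @ \<beta>) (sc (Delta_it (length \<alpha>) s \<gamma> * ((-1) ^ s / fact s)) (pr s a b)) \<omega>)"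

lemma tens_ok_EP_mono: "tens_ok (length \<alpha> + length \<beta>) (EP_mono \<alpha> a \<beta> b)"
  unfolding EP_mono_def by (intro tens_ok_sum tens_ok_sing) (auto dest: Delta_it_nonzeroD)

lemma EP_term_eq_EP_mono:
  assumes "length \<beta> = Suc m"
  shows "(let ab = pseudo sc pr a b in
        \<Sum>\<rho>\<in>{\<rho>. ab \<rho> \<noteq> 0}.
        \<Sum>\<gamma>\<in>{\<gamma>. (Delta_it (length \<alpha>) (\<rho> ! 0) \<gamma> :: 'k) \<noteq> 0}.
        \<Sum>\<delta>\<in>{\<delta>. (Delta_it (Suc m) (\<rho> ! 1) \<delta> :: 'k) \<noteq> 0}.
          (if \<omega> = map2 (+) \<alpha> \<gamma> @ map2 (+) \<beta> \<delta>
           then sc (Delta_it (length \<alpha>) (\<rho> ! 0) \<gamma> * Delta_it (Suc m) (\<rho> ! 1) \<delta>) (ab \<rho>) else 0))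
     = EP_mono \<alpha> a \<beta> b \<omega>"
proof -
  define F where "F \<rho> = (\<Sum>\<gamma>\<in>{\<gamma>. (Delta_it (length \<alpha>) (\<rho> ! 0) \<gamma> :: 'k) \<noteq> 0}.
        \<Sum>\<delta>\<in>{\<delta>. (Delta_it (Suc m) (\<rho> ! 1) \<delta> :: 'k) \<noteq> 0}.
          (if \<omega> = map2 (+) \<alpha> \<gamma> @ map2 (+) \<beta> \<delta>
           then sc (Delta_it (length \<alpha>) (\<rho> ! 0) \<gamma> * Delta_it (Suc m) (\<rho> ! 1) \<delta>) (pseudo sc pr a b \<rho>) else 0))"
    for \<rho>
  have "(\<Sum>\<rho>\<in>{\<rho>. pseudo sc pr a b \<rho> \<noteq> 0}. F \<rho>) = (\<Sum>\<rho>\<in>(\<lambda>s. [s, 0]) ` {..<pr_bound a b}. F \<rho>)"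
  proof (rule sum.mono_neutral_left)
    show "{\<rho>. pseudo sc pr a b \<rho> \<noteq> 0} \<subseteq> (\<lambda>s. [s, 0]) ` {..<pr_bound a b}"
      using pseudo_nonzeroD by blast
  qed (auto simp: F_def cong: if_cong)
  also have "\<dots> = (\<Sum>s<pr_bound a b. F [s, 0])"
    by (rule sum.reindex[unfolded comp_def]) (auto simp: inj_on_def)
  also have "\<dots> = EP_mono \<alpha> a \<beta> b \<omega>"
    unfolding EP_mono_def
  proof (rule sum.cong[OF refl])
    fix s
    have "[s, 0 :: nat] ! 0 = s" "[s, 0 :: nat] ! 1 = 0"
      by simp_all
    then show "F [s, 0] = (\<Sum>\<gamma>\<in>{\<gamma>. (Delta_it (length \<alpha>) s \<gamma> :: 'k) \<noteq> 0}.
        sing (map2 (+) \<alpha> \<gamma> @ \<beta>) (sc (Delta_it (length \<alpha>) s \<gamma> * ((-1) ^ s / fact s)) (pr s a b)) \<omega>)"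
      unfolding F_def using assms
      by (simp add: Delta_it_support_exponent_0 map2_plus_replicate_0 Delta_it_exponent_0 pseudo_Cons_0 sing_def
          del: replicate_Suc cong: if_cong)
  qed
  finally show ?thesis
    unfolding F_def Let_def .
qed

lemma EP_eq_sum_EP_mono:
  assumes A: "tens_ok (Suc s) A" and B: "tens_ok (Suc m) B"
  shows "EP sc pr (Suc s) (Suc m) A B =
    (\<lambda>\<omega>. \<Sum>\<alpha>\<in>{\<alpha>. A \<alpha> \<noteq> 0}. \<Sum>\<beta>\<in>{\<beta>. B \<beta> \<noteq> 0}. EP_mono \<alpha> (A \<alpha>) \<beta> (B \<beta>) \<omega>)"
  unfolding EP_def
proof (intro ext sum.cong refl)
  fix \<omega> \<alpha> \<beta> assume "\<alpha> \<in> {\<alpha>. A \<alpha> \<noteq> 0}" and "\<beta> \<in> {\<beta>. B \<beta> \<noteq> 0}"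
  then have "length \<alpha> = Suc s" and "length \<beta> = Suc m"
    using A B by (simp_all add: tens_ok_def)
  then show "(let ab = pseudo sc pr (A \<alpha>) (B \<beta>) in
        \<Sum>\<rho>\<in>{\<rho>. ab \<rho> \<noteq> 0}.
        \<Sum>\<gamma>\<in>{\<gamma>. (Delta_it (Suc s) (\<rho> ! 0) \<gamma> :: 'k) \<noteq> 0}.
        \<Sum>\<delta>\<in>{\<delta>. (Delta_it (Suc m) (\<rho> ! 1) \<delta> :: 'k) \<noteq> 0}.
          (if \<omega> = map2 (+) \<alpha> \<gamma> @ map2 (+) \<beta> \<delta>
           then sc (Delta_it (Suc s) (\<rho> ! 0) \<gamma> * Delta_it (Suc m) (\<rho> ! 1) \<delta>) (ab \<rho>) else 0))
       = EP_mono \<alpha> (A \<alpha>) \<beta> (B \<beta>) \<omega>"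
    using EP_term_eq_EP_mono[where \<alpha>=\<alpha> and \<omega>=\<omega> and a="A \<alpha>" and b="B \<beta>" and \<beta>=\<beta> and m=m] by (simp cong: if_cong)
qed

lemma tens_ok_EP:
  assumes "tens_ok (Suc s) A" and "tens_ok (Suc m) B"
  shows "tens_ok (Suc s + Suc m) (EP sc pr (Suc s) (Suc m) A B)"
  unfolding EP_eq_sum_EP_mono[OF assms]
  using assms tens_ok_EP_mono by (intro tens_ok_sum) (auto simp: tens_ok_def)

lemma pr_Dpow_left: "pr K ((d ^^ e) a) b = sc ((-1) ^ e * of_nat (ffact K e)) (pr (K - e) a b)"
proof (induction e arbitrary: K)
  case (Suc e)
  have "of_nat K * ((-1) ^ e * of_nat (ffact (K - 1) e)) = ((-1) ^ e * of_nat (ffact K (Suc e)) :: 'k)"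
    by (cases K) (simp_all add: ffact_eq_0 ffact_Suc_Suc algebra_simps)
  then show ?case
    by (simp add: pr_D_left Suc.IH flip: diff_Suc_eq_diff_pred)
qed simp

lemma sum_binomial_Suc_split_scale:
  "(\<Sum>i\<le>Suc L. sc (of_nat (Suc L choose i)) (v i)) =
   (\<Sum>i\<le>L. sc (of_nat (L choose i)) (v i)) + (\<Sum>i\<le>L. sc (of_nat (L choose i)) (v (Suc i)))"
proof -
  have "(\<Sum>i\<le>Suc L. sc (of_nat (Suc L choose i)) (v i)) =
      v 0 + (\<Sum>i\<le>L. sc (of_nat (L choose Suc i)) (v (Suc i))) + (\<Sum>i\<le>L. sc (of_nat (L choose i)) (v (Suc i)))"
    by (subst sum.atMost_Suc_shift) (simp add: sum.distrib scale_left_distrib algebra_simps)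
  also have "v 0 + (\<Sum>i\<le>L. sc (of_nat (L choose Suc i)) (v (Suc i))) = (\<Sum>i\<le>Suc L. sc (of_nat (L choose i)) (v i))"
    by (subst sum.atMost_Suc_shift) simp
  also have "\<dots> = (\<Sum>i\<le>L. sc (of_nat (L choose i)) (v i))"
    by (simp add: binomial_eq_0)
  finally show ?thesis .
qed

lemma pr_Dpow_right:
  "pr L a ((d ^^ f) b) = (\<Sum>i\<le>f. sc (of_nat (f choose i) * of_nat (ffact L i)) ((d ^^ (f - i)) (pr (L - i) a b)))"
proof (induction f arbitrary: b)
  case (Suc f)
  let ?X = "\<lambda>i. pr (L - i) a b"
  have step: "sc (of_nat (f choose i) * of_nat (ffact L i)) ((d ^^ (f - i)) (pr (L - i) a (d b))) =
      sc (of_nat (f choose i) * of_nat (ffact L i)) ((d ^^ (Suc f - i)) (?X i)) +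
      sc (of_nat (f choose i) * of_nat (ffact L (Suc i))) ((d ^^ (Suc f - Suc i)) (?X (Suc i)))"
    if "i \<le> f" for i
  proof -
    have "(d ^^ (f - i)) (d (?X i)) = (d ^^ (Suc f - i)) (?X i)"
      using that by (simp add: Suc_diff_le funpow_Suc_right del: funpow.simps)
    moreover have "of_nat (ffact L i) * of_nat (L - i) = (of_nat (ffact L (Suc i)) :: 'k)"
      by (simp add: ffact_Suc)
    ultimately show ?thesis
      by (simp add: pr_D_right Dpow_add Dpow_scale scale_right_distrib mult.assoc)
  qed
  have "pr L a ((d ^^ Suc f) b) = pr L a ((d ^^ f) (d b))"
    by (simp add: funpow_Suc_right del: funpow.simps)
  also have "\<dots> = (\<Sum>i\<le>f. sc (of_nat (f choose i)) (sc (of_nat (ffact L i)) ((d ^^ (Suc f - i)) (?X i)))) +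
      (\<Sum>i\<le>f. sc (of_nat (f choose i)) (sc (of_nat (ffact L (Suc i))) ((d ^^ (Suc f - Suc i)) (?X (Suc i)))))"
    by (simp add: Suc.IH step sum.distrib)
  also have "\<dots> = (\<Sum>i\<le>Suc f. sc (of_nat (Suc f choose i)) (sc (of_nat (ffact L i)) ((d ^^ (Suc f - i)) (?X i))))"
    by (rule sum_binomial_Suc_split_scale[symmetric])
  finally show ?case
    by simp
qed simp

text \<open>The sesquilinearity \<open>pr_Dpow_right\<close>, read backwards.\<close>

lemma sum_binomial_pr_Dpow:
  "(\<Sum>s<pr_bound a b. sc (of_nat (L choose s) * of_nat (ffact q (L + L2 - s))) ((d ^^ (q + s - (L + L2))) (pr s a b)))
    = sc (of_nat (ffact q L2)) (pr L a ((d ^^ (q - L2)) b))"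
proof -
  define f where "f = q - L2"
  let ?g = "\<lambda>s. sc (of_nat (L choose s) * of_nat (ffact q (L + L2 - s))) ((d ^^ (q + s - (L + L2))) (pr s a b))"
  let ?h = "\<lambda>i. sc (of_nat (ffact q L2) * (of_nat (f choose i) * of_nat (ffact L i))) ((d ^^ (f - i)) (pr (L - i) a b))"
  have reflect: "?g (L - i) = ?h i" if "i \<le> L" for i
  proof -
    have "q + (L - i) - (L + L2) = f - i"
      using that by (simp add: f_def)
    then show ?thesis
      using binomial_ffact_reflect[OF that, of q L2] unfolding f_def by (metis of_nat_mult)
  qed
  have "(\<Sum>s<pr_bound a b. ?g s) = (\<Sum>s<pr_bound a b + L + 1. ?g s)"
    by (rule sum.mono_neutral_left) (auto simp: pr_beyond_bound)
  also have "\<dots> = (\<Sum>s\<le>L. ?g s)"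
    by (rule sum.mono_neutral_right) (auto simp: binomial_eq_0)
  also have "\<dots> = (\<Sum>i\<le>L. ?h i)"
    using sum.atLeastAtMost_rev[of ?g 0 L] reflect by (simp add: atLeast0AtMost)
  also have "\<dots> = (\<Sum>i\<le>L + f. ?h i)"
    by (rule sum.mono_neutral_left) (auto simp: ffact_eq_0)
  also have "\<dots> = (\<Sum>i\<le>f. ?h i)"
    by (rule sum.mono_neutral_right) (auto simp: binomial_eq_0)
  also have "\<dots> = sc (of_nat (ffact q L2)) (pr L a ((d ^^ (q - L2)) b))"
    unfolding pr_Dpow_right f_def by (simp add: scale_sum_right mult_ac)
  finally show ?thesis .
qed

section \<open>Projections of expanded pseudoproducts\<close>

lemma Pmono_EP_mono:
  "Pmono \<kappa> (EP_mono \<alpha> a \<beta> b) = (\<Sum>s<pr_bound a b.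
     sc (((-1) ^ s / fact s) * (\<Sum>\<gamma>\<in>{\<gamma>. (Delta_it (length \<alpha>) s \<gamma> :: 'k) \<noteq> 0}.
           Delta_it (length \<alpha>) s \<gamma> * Pcoeff \<kappa> (map2 (+) \<alpha> \<gamma> @ \<beta>)))
       ((d ^^ (sum_list \<alpha> + s + sum_list \<beta> - sum_list \<kappa>)) (pr s a b)))"
proof -
  have tens: "tens_ok (length \<alpha> + length \<beta>) (sing (map2 (+) \<alpha> \<gamma> @ \<beta>) c)"
    if "(Delta_it (length \<alpha>) s \<gamma> :: 'k) \<noteq> 0" for s \<gamma> c
    using Delta_it_nonzeroD[OF that] by (intro tens_ok_sing) simp
  have "Pmono \<kappa> (EP_mono \<alpha> a \<beta> b) = (\<Sum>s<pr_bound a b. Pmono \<kappa> (\<lambda>\<omega>. \<Sum>\<gamma>\<in>{\<gamma>. (Delta_it (length \<alpha>) s \<gamma> :: 'k) \<noteq> 0}.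
      sing (map2 (+) \<alpha> \<gamma> @ \<beta>) (sc (Delta_it (length \<alpha>) s \<gamma> * ((-1) ^ s / fact s)) (pr s a b)) \<omega>))"
    unfolding EP_mono_def using tens by (intro Pmono_sum tens_ok_sum) auto
  also have "\<dots> = (\<Sum>s<pr_bound a b. \<Sum>\<gamma>\<in>{\<gamma>. (Delta_it (length \<alpha>) s \<gamma> :: 'k) \<noteq> 0}.
      Pmono \<kappa> (sing (map2 (+) \<alpha> \<gamma> @ \<beta>) (sc (Delta_it (length \<alpha>) s \<gamma> * ((-1) ^ s / fact s)) (pr s a b))))"
    using tens by (intro sum.cong refl Pmono_sum) auto
  also have "\<dots> = (\<Sum>s<pr_bound a b. \<Sum>\<gamma>\<in>{\<gamma>. (Delta_it (length \<alpha>) s \<gamma> :: 'k) \<noteq> 0}.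
      sc (((-1) ^ s / fact s) * (Delta_it (length \<alpha>) s \<gamma> * Pcoeff \<kappa> (map2 (+) \<alpha> \<gamma> @ \<beta>)))
       ((d ^^ (sum_list \<alpha> + s + sum_list \<beta> - sum_list \<kappa>)) (pr s a b)))"
  proof (intro sum.cong refl)
    fix s \<gamma> assume "\<gamma> \<in> {\<gamma>. (Delta_it (length \<alpha>) s \<gamma> :: 'k) \<noteq> 0}"
    then have "sum_list (map2 (+) \<alpha> \<gamma> @ \<beta>) = sum_list \<alpha> + s + sum_list \<beta>"
      using Delta_it_nonzeroD by (fastforce simp: sum_list_map2_plus)
    then show "Pmono \<kappa> (sing (map2 (+) \<alpha> \<gamma> @ \<beta>) (sc (Delta_it (length \<alpha>) s \<gamma> * ((-1) ^ s / fact s)) (pr s a b))) =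
      sc (((-1) ^ s / fact s) * (Delta_it (length \<alpha>) s \<gamma> * Pcoeff \<kappa> (map2 (+) \<alpha> \<gamma> @ \<beta>)))
       ((d ^^ (sum_list \<alpha> + s + sum_list \<beta> - sum_list \<kappa>)) (pr s a b))"
      by (simp add: Pmono_sing Dpow_scale mult_ac)
  qed
  finally show ?thesis
    by (simp add: sum_distrib_left scale_sum_left)
qed

lemma sum_Delta_it_Pcoeff_append:
  assumes l1: "length \<kappa>1 = length a" and l2: "length \<kappa>2 = length b"
  shows "(\<Sum>\<gamma>\<in>{\<gamma>. (Delta_it (Suc (length a)) s \<gamma> :: 'k) \<noteq> 0}.
      (Delta_it (Suc (length a)) s \<gamma> :: 'k) * Pcoeff (\<kappa>1 @ k # \<kappa>2) (map2 (+) (a @ [p]) \<gamma> @ b @ [q]))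
    = (-1) ^ (sum_list a + p + s + sum_list b) *
      of_nat ((\<Prod>i<length a. ffact (\<kappa>1 ! i) (a ! i)) * ffact k p) *
      of_nat (ffact (sum_list \<kappa>1 + k - (sum_list a + p)) s) * of_nat (\<Prod>i<length b. ffact (\<kappa>2 ! i) (b ! i)) *
      of_nat (ffact q (sum_list \<kappa>1 + k + sum_list \<kappa>2 - (sum_list a + p + s + sum_list b)))"
proof -
  let ?G = "{\<gamma>. (Delta_it (Suc (length a)) s \<gamma> :: 'k) \<noteq> 0}"
  let ?c = "(-1) ^ (sum_list a + p + s + sum_list b) * of_nat (\<Prod>i<length b. ffact (\<kappa>2 ! i) (b ! i)) *
      (of_nat (ffact q (sum_list \<kappa>1 + k + sum_list \<kappa>2 - (sum_list a + p + s + sum_list b))) :: 'k)"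
  have "(\<Sum>\<gamma>\<in>?G. (Delta_it (Suc (length a)) s \<gamma> :: 'k) * Pcoeff (\<kappa>1 @ k # \<kappa>2) (map2 (+) (a @ [p]) \<gamma> @ b @ [q])) =
      ?c * (\<Sum>\<gamma>\<in>?G. (Delta_it (Suc (length a)) s \<gamma> :: 'k) *
        of_nat (\<Prod>i<Suc (length a). ffact ((\<kappa>1 @ [k]) ! i) ((a @ [p]) ! i + \<gamma> ! i)))"
    unfolding sum_distrib_left
  proof (rule sum.cong[OF refl])
    fix \<gamma> assume "\<gamma> \<in> ?G"
    then have "length \<gamma> = Suc (length a)" and "sum_list \<gamma> = s"
      using Delta_it_nonzeroD by blast+
    then show "(Delta_it (Suc (length a)) s \<gamma> :: 'k) * Pcoeff (\<kappa>1 @ k # \<kappa>2) (map2 (+) (a @ [p]) \<gamma> @ b @ [q]) =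
        ?c * ((Delta_it (Suc (length a)) s \<gamma> :: 'k) *
          of_nat (\<Prod>i<Suc (length a). ffact ((\<kappa>1 @ [k]) ! i) ((a @ [p]) ! i + \<gamma> ! i)))"
      by (simp only: Pcoeff_append[OF l1 l2] mult_ac)
  qed
  also have "\<dots> = ?c * (of_nat (\<Prod>i<Suc (length a). ffact ((\<kappa>1 @ [k]) ! i) ((a @ [p]) ! i)) *
       of_nat (ffact (sum_list (\<kappa>1 @ [k]) - sum_list (a @ [p])) s))"
    using l1 by (simp only: sum_Delta_it_ffact_shift length_append_singleton)
  also have "\<dots> = ?c * (of_nat ((\<Prod>i<length a. ffact (\<kappa>1 ! i) (a ! i)) * ffact k p) *
       of_nat (ffact (sum_list \<kappa>1 + k - (sum_list a + p)) s))"
    using l1 by (simp add: nth_append add.assoc)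
  finally show ?thesis
    by (simp only: mult_ac)
qed

lemma sum_binomial_pr_Pmono_sing_right:
  assumes "list_all2 (\<le>) b \<kappa>"
  shows "(\<Sum>s<pr_bound x y. sc ((-1) ^ sum_list b * of_nat (\<Prod>i<length b. ffact (\<kappa> ! i) (b ! i)) *
      (of_nat (L choose s) * of_nat (ffact q (L + (sum_list \<kappa> - sum_list b) - s))))
      ((d ^^ (q + s - (L + (sum_list \<kappa> - sum_list b)))) (pr s x y))) =
    pr L x (Pmono \<kappa> (sing (b @ [q]) y))"
proof -
  define L2 where "L2 = sum_list \<kappa> - sum_list b"
  define c where "c = ((-1) ^ sum_list b * of_nat (\<Prod>i<length b. ffact (\<kappa> ! i) (b ! i)) :: 'k)"
  have "(\<Sum>s<pr_bound x y. sc (c * (of_nat (L choose s) * of_nat (ffact q (L + L2 - s))))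
      ((d ^^ (q + s - (L + L2))) (pr s x y))) = sc c (\<Sum>s<pr_bound x y.
        sc (of_nat (L choose s) * of_nat (ffact q (L + L2 - s))) ((d ^^ (q + s - (L + L2))) (pr s x y)))"
    by (simp add: scale_sum_right)
  also have "\<dots> = sc c (sc (of_nat (ffact q L2)) (pr L x ((d ^^ (q - L2)) y)))"
    by (simp only: sum_binomial_pr_Dpow)
  also have "\<dots> = pr L x (Pmono \<kappa> (sing (b @ [q]) y))"
  proof (cases "ffact q L2 = 0")
    case False
    then have "sum_list (b @ [q]) - sum_list \<kappa> = q - L2"
      using list_all2_le_sum_list[OF assms] by (simp add: L2_def ffact_neq_0_iff)
    then show ?thesis
      using list_all2_lengthD[OF assms]
      by (simp add: Pmono_sing Pcoeff_snoc pr_scale_right c_def L2_def mult_ac)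
  qed (use list_all2_lengthD[OF assms] in \<open>simp add: Pmono_sing Pcoeff_snoc L2_def\<close>)
  finally show ?thesis
    unfolding c_def L2_def .
qed

lemma Pmono_EP_mono_append:
  assumes l1: "length \<kappa>1 = length a" and l2: "length \<kappa>2 = length b"
  shows "Pmono (\<kappa>1 @ k # \<kappa>2) (EP_mono (a @ [p]) x (b @ [q]) y) =
    sc ((-1) ^ (sum_list a + p) * of_nat ((\<Prod>i<length a. ffact (\<kappa>1 ! i) (a ! i)) * ffact k p))
      (pr (sum_list \<kappa>1 + k - (sum_list a + p)) x (Pmono \<kappa>2 (sing (b @ [q]) y)))"
proof -
  define P where "P = (\<Prod>i<length a. ffact (\<kappa>1 ! i) (a ! i)) * ffact k p"
  define P2 where "P2 = (\<Prod>i<length b. ffact (\<kappa>2 ! i) (b ! i))"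
  define L where "L = sum_list \<kappa>1 + k - (sum_list a + p)"
  define \<sigma> where "\<sigma> = ((-1) ^ (sum_list a + p) :: 'k)"
  let ?E = "\<lambda>s. sum_list \<kappa>1 + k + sum_list \<kappa>2 - (sum_list a + p + s + sum_list b)"
  let ?D = "\<lambda>s. sum_list (a @ [p]) + s + sum_list (b @ [q]) - sum_list (\<kappa>1 @ k # \<kappa>2)"
  have coeff: "(-1) ^ s / fact s * ((-1) ^ (sum_list a + p + s + sum_list b) * of_nat P * of_nat (ffact L s) *
      of_nat P2 * of_nat (ffact q (?E s))) =
      \<sigma> * of_nat P * ((-1) ^ sum_list b * of_nat P2 * (of_nat (L choose s) * of_nat (ffact q (?E s))))" for s
  proof -
    have "((-1) ^ s * (-1) ^ s :: 'k) = 1"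
      by (simp flip: power_add)
    then show ?thesis
      by (simp add: \<sigma>_def power_add field_simps flip: of_nat_ffact_div_fact)
  qed
  have "Pmono (\<kappa>1 @ k # \<kappa>2) (EP_mono (a @ [p]) x (b @ [q]) y) = (\<Sum>s<pr_bound x y.
      sc (\<sigma> * of_nat P * ((-1) ^ sum_list b * of_nat P2 * (of_nat (L choose s) * of_nat (ffact q (?E s)))))
        ((d ^^ ?D s) (pr s x y)))"
    unfolding Pmono_EP_mono length_append_singleton sum_Delta_it_Pcoeff_append[OF l1 l2]
    by (simp only: coeff flip: P_def P2_def L_def)
  also have "\<dots> = sc (\<sigma> * of_nat P) (pr L x (Pmono \<kappa>2 (sing (b @ [q]) y)))"
  proof (cases "P = 0 \<or> P2 = 0")
    case False
    then have nz: "(\<Prod>i<length a. ffact (\<kappa>1 ! i) (a ! i)) \<noteq> 0" "ffact k p \<noteq> 0" "P2 \<noteq> 0"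
      by (simp_all add: P_def)
    then have a: "list_all2 (\<le>) a \<kappa>1" and "p \<le> k" and b: "list_all2 (\<le>) b \<kappa>2"
      using prod_ffact_neq_0_iff[of a \<kappa>1] prod_ffact_neq_0_iff[of b \<kappa>2] l1 l2 ffact_neq_0_iff
      unfolding P2_def by metis+
    then have E: "?E s = L + (sum_list \<kappa>2 - sum_list b) - s"
      and D: "?D s = q + s - (L + (sum_list \<kappa>2 - sum_list b))" for s
      using list_all2_le_sum_list[OF a] list_all2_le_sum_list[OF b] \<open>p \<le> k\<close> by (simp_all add: L_def)
    have "(\<Sum>s<pr_bound x y. sc (\<sigma> * of_nat P * ((-1) ^ sum_list b * of_nat P2 *
        (of_nat (L choose s) * of_nat (ffact q (?E s))))) ((d ^^ ?D s) (pr s x y))) =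
        sc (\<sigma> * of_nat P) (\<Sum>s<pr_bound x y. sc ((-1) ^ sum_list b * of_nat P2 *
          (of_nat (L choose s) * of_nat (ffact q (?E s)))) ((d ^^ ?D s) (pr s x y)))"
      by (simp add: scale_sum_right)
    also have "\<dots> = sc (\<sigma> * of_nat P) (pr L x (Pmono \<kappa>2 (sing (b @ [q]) y)))"
      unfolding E D P2_def sum_binomial_pr_Pmono_sing_right[OF b] ..
    finally show ?thesis .
  next
    case True
    then have "\<sigma> * of_nat P * ((-1) ^ sum_list b * of_nat P2) = 0"
      by auto
    moreover have "P = 0 \<or> Pmono \<kappa>2 (sing (b @ [q]) y) = 0"
      using True l2 by (auto simp: Pmono_sing Pcoeff_snoc P2_def)
    ultimately show ?thesis
      by auto
  qed
  finally show ?thesis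
    by (simp add: \<sigma>_def P_def L_def)
qed

lemma binomial_pr_Pmono_sing_left:
  assumes j: "list_all2 (\<le>) j \<kappa>" and la: "length a = length \<kappa>"
  shows "sc (\<Prod>i<length \<kappa>. of_nat (\<kappa> ! i choose j ! i)) (pr (k + sum_list j) (Pmono (map2 (-) \<kappa> j) (sing (a @ [p]) x)) v) =
    sc ((-1) ^ sum_list a * of_nat (\<Prod>i<length \<kappa>. ffact (\<kappa> ! i) (a ! i)) *
        of_nat (\<Prod>i<length \<kappa>. (\<kappa> ! i - a ! i) choose j ! i) *
        (of_nat (ffact p (sum_list \<kappa> - sum_list j - sum_list a)) * (-1) ^ (sum_list a + p - (sum_list \<kappa> - sum_list j)) *
         of_nat (ffact (k + sum_list j) (sum_list a + p - (sum_list \<kappa> - sum_list j)))))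
      (pr (sum_list \<kappa> + k - (sum_list a + p)) x v)"
proof -
  let ?w = "map2 (-) \<kappa> j" and ?e = "sum_list a + p - (sum_list \<kappa> - sum_list j)"
  let ?C = "\<Prod>i<length \<kappa>. (of_nat (\<kappa> ! i choose j ! i) :: 'k)"
  have lw: "length ?w = length \<kappa>" and sw: "sum_list ?w = sum_list \<kappa> - sum_list j"
    using j by (simp_all add: list_all2_lengthD sum_list_map2_minus)
  have "sc ?C (pr (k + sum_list j) (Pmono ?w (sing (a @ [p]) x)) v) =
      sc (?C * Pcoeff ?w (a @ [p]) * ((-1) ^ ?e * of_nat (ffact (k + sum_list j) ?e))) (pr (k + sum_list j - ?e) x v)"
    using sw by (simp add: Pmono_sing pr_scale_left pr_Dpow_left mult.assoc add_ac)
  also have "\<dots> = sc (?C * Pcoeff ?w (a @ [p]) * ((-1) ^ ?e * of_nat (ffact (k + sum_list j) ?e)))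
      (pr (sum_list \<kappa> + k - (sum_list a + p)) x v)"
  proof (cases "Pcoeff ?w (a @ [p]) = (0 :: 'k) \<or> ffact (k + sum_list j) ?e = 0")
    case False
    then have "list_all2 (\<le>) a ?w" "sum_list ?w - sum_list a \<le> p" "?e \<le> k + sum_list j"
      using Pcoeff_snoc_nonzeroD[of a ?w p] la lw ffact_neq_0_iff by auto
    moreover have "sum_list j \<le> sum_list \<kappa>"
      using j by (rule list_all2_le_sum_list)
    ultimately have "k + sum_list j - ?e = sum_list \<kappa> + k - (sum_list a + p)"
      using list_all2_le_sum_list[of a ?w] sw by linarith
    then show ?thesis
      by simp
  qed auto
  finally show ?thesis
    by (simp only: prod_binomial_mult_Pcoeff[OF j la] mult.assoc)
qed
lemma sum_binomial_pr_Pmono_sing_left: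
  assumes la: "length a = length \<kappa>"
  shows "(\<Sum>j\<in>{j. list_all2 (\<le>) j \<kappa>}.
      sc (\<Prod>i<length \<kappa>. of_nat (\<kappa> ! i choose j ! i)) (pr (k + sum_list j) (Pmono (map2 (-) \<kappa> j) (sing (a @ [p]) x)) v)) =
    sc ((-1) ^ (sum_list a + p) * of_nat ((\<Prod>i<length a. ffact (\<kappa> ! i) (a ! i)) * ffact k p))
      (pr (sum_list \<kappa> + k - (sum_list a + p)) x v)"
proof -
  define P where "P = (\<Prod>i<length \<kappa>. ffact (\<kappa> ! i) (a ! i))"
  define N where "N = map2 (-) \<kappa> a"
  define G where "G J = of_nat (ffact p (sum_list \<kappa> - J - sum_list a)) * (-1) ^ (sum_list a + p - (sum_list \<kappa> - J)) *
      (of_nat (ffact (k + J) (sum_list a + p - (sum_list \<kappa> - J))) :: 'k)" for J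
  have "(\<Sum>j\<in>{j. list_all2 (\<le>) j \<kappa>}.
      sc (\<Prod>i<length \<kappa>. of_nat (\<kappa> ! i choose j ! i)) (pr (k + sum_list j) (Pmono (map2 (-) \<kappa> j) (sing (a @ [p]) x)) v)) =
      sc ((-1) ^ sum_list a * of_nat P * (\<Sum>j\<in>{j. list_all2 (\<le>) j \<kappa>}. of_nat (\<Prod>i<length \<kappa>. N ! i choose j ! i) * G (sum_list j)))
        (pr (sum_list \<kappa> + k - (sum_list a + p)) x v)"
    using la
    by (simp add: binomial_pr_Pmono_sing_left scale_sum_left sum_distrib_left P_def N_def G_def mult_ac
        del: of_nat_prod)
  also have "(-1) ^ sum_list a * of_nat P * (\<Sum>j\<in>{j. list_all2 (\<le>) j \<kappa>}. of_nat (\<Prod>i<length \<kappa>. N ! i choose j ! i) * G (sum_list j)) =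
      (-1) ^ (sum_list a + p) * of_nat (P * ffact k p)"
  proof (cases "P = 0")
    case False
    then have "list_all2 (\<le>) a \<kappa>"
      using prod_ffact_neq_0_iff[OF la] by (simp add: P_def)
    have "(\<Sum>j\<in>{j. list_all2 (\<le>) j \<kappa>}. of_nat (\<Prod>i<length \<kappa>. N ! i choose j ! i) * G (sum_list j)) =
        (\<Sum>J\<le>sum_list N. of_nat (sum_list N choose J) * G J)"
      using la by (intro vandermonde_sum_list) (simp add: N_def list_all2_conv_all_nth)
    also have "\<dots> = (-1) ^ p * of_nat (ffact k p)"
      unfolding G_def N_def sum_list_map2_minus[OF \<open>list_all2 (\<le>) a \<kappa>\<close>]
      using \<open>list_all2 (\<le>) a \<kappa>\<close> by (intro sum_binomial_ffact_alternating_rev list_all2_le_sum_list)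
    finally show ?thesis
      by (simp add: power_add mult_ac)
  qed simp
  finally show ?thesis
    using la by (simp add: P_def)
qed

lemma Pmono_EP_mono_eq:
  assumes "length \<alpha> = Suc (length \<kappa>1)" and "length \<beta> = Suc (length \<kappa>2)"
  shows "Pmono (\<kappa>1 @ k # \<kappa>2) (EP_mono \<alpha> x \<beta> y) = (\<Sum>j\<in>{j. list_all2 (\<le>) j \<kappa>1}.
      sc (\<Prod>i<length \<kappa>1. of_nat (\<kappa>1 ! i choose j ! i))
        (pr (k + sum_list j) (Pmono (map2 (-) \<kappa>1 j) (sing \<alpha> x)) (Pmono \<kappa>2 (sing \<beta> y))))"
proof -
  obtain a p b q where "\<alpha> = a @ [p]" "\<beta> = b @ [q]" "length a = length \<kappa>1" "length b = length \<kappa>2"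
    using assms by (cases \<alpha> rule: rev_cases; cases \<beta> rule: rev_cases) auto
  then show ?thesis
    by (simp add: Pmono_EP_mono_append sum_binomial_pr_Pmono_sing_left)
qed

lemma Pmono_eq_sum_sing: "Pmono \<kappa> R = (\<Sum>\<alpha>\<in>{\<alpha>. R \<alpha> \<noteq> 0}. Pmono \<kappa> (sing \<alpha> (R \<alpha>)))"
  unfolding Pmono_sing by (simp only: Pmono_def)

lemma Pmono_EP:
  assumes A: "tens_ok (Suc s) A" and B: "tens_ok (Suc m) B" and "length \<kappa>1 = s" and "length \<kappa>2 = m"
  shows "Pmono (\<kappa>1 @ k # \<kappa>2) (EP sc pr (Suc s) (Suc m) A B) = (\<Sum>j\<in>{j. list_all2 (\<le>) j \<kappa>1}.
      sc (\<Prod>i<length \<kappa>1. of_nat (\<kappa>1 ! i choose j ! i))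
        (pr (k + sum_list j) (Pmono (map2 (-) \<kappa>1 j) A) (Pmono \<kappa>2 B)))"
proof -
  have fin: "finite {\<alpha>. A \<alpha> \<noteq> 0}" "finite {\<beta>. B \<beta> \<noteq> 0}"
    using A B by (simp_all add: tens_ok_def)
  have tens: "tens_ok (Suc s + Suc m) (EP_mono \<alpha> (A \<alpha>) \<beta> (B \<beta>))" if "A \<alpha> \<noteq> 0" "B \<beta> \<noteq> 0" for \<alpha> \<beta>
    using that A B tens_ok_EP_mono[of \<alpha> \<beta>] by (simp add: tens_ok_def)
  have "Pmono (\<kappa>1 @ k # \<kappa>2) (EP sc pr (Suc s) (Suc m) A B) =
      (\<Sum>\<alpha>\<in>{\<alpha>. A \<alpha> \<noteq> 0}. Pmono (\<kappa>1 @ k # \<kappa>2) (\<lambda>\<omega>. \<Sum>\<beta>\<in>{\<beta>. B \<beta> \<noteq> 0}. EP_mono \<alpha> (A \<alpha>) \<beta> (B \<beta>) \<omega>))"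
    unfolding EP_eq_sum_EP_mono[OF A B] using fin tens by (intro Pmono_sum tens_ok_sum) auto
  also have "\<dots> = (\<Sum>\<alpha>\<in>{\<alpha>. A \<alpha> \<noteq> 0}. \<Sum>\<beta>\<in>{\<beta>. B \<beta> \<noteq> 0}. Pmono (\<kappa>1 @ k # \<kappa>2) (EP_mono \<alpha> (A \<alpha>) \<beta> (B \<beta>)))"
    using fin tens by (intro sum.cong refl Pmono_sum) auto
  also have "\<dots> = (\<Sum>\<alpha>\<in>{\<alpha>. A \<alpha> \<noteq> 0}. \<Sum>\<beta>\<in>{\<beta>. B \<beta> \<noteq> 0}. \<Sum>j\<in>{j. list_all2 (\<le>) j \<kappa>1}.
      sc (\<Prod>i<length \<kappa>1. of_nat (\<kappa>1 ! i choose j ! i))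
        (pr (k + sum_list j) (Pmono (map2 (-) \<kappa>1 j) (sing \<alpha> (A \<alpha>))) (Pmono \<kappa>2 (sing \<beta> (B \<beta>)))))"
    using assms by (intro sum.cong refl Pmono_EP_mono_eq) (auto simp: tens_ok_def)
  also have "\<dots> = (\<Sum>j\<in>{j. list_all2 (\<le>) j \<kappa>1}. sc (\<Prod>i<length \<kappa>1. of_nat (\<kappa>1 ! i choose j ! i))
      (pr (k + sum_list j) (Pmono (map2 (-) \<kappa>1 j) A) (Pmono \<kappa>2 B)))"
    unfolding Pmono_eq_sum_sing[of _ A] Pmono_eq_sum_sing[of _ B] pr_sum_left pr_sum_right scale_sum_right
    by (subst sum.swap, subst (2) sum.swap) (simp only: sum.swap[of _ "{\<beta>. B \<beta> \<noteq> 0}"])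
  finally show ?thesis .
qed

lemma finite_coeff_nonzero: "finite {k. coeff y k \<noteq> 0}"
  by (rule finite_subset[of _ "{..degree y}"]) (auto intro: le_degree)

lemma Pmap_tens3:
  assumes R: "tens_ok (Suc (r + Suc m)) R" and X: "tens_ok r X" and Z: "tens_ok m Z"
  shows "Pmap sc d (Suc (r + Suc m)) (tens3 r m X y Z) R =
    (\<Sum>\<kappa>1\<in>{\<kappa>. X \<kappa> \<noteq> 0}. \<Sum>k\<in>{k. coeff y k \<noteq> 0}. \<Sum>\<kappa>2\<in>{\<kappa>. Z \<kappa> \<noteq> 0}.
      sc (X \<kappa>1 * coeff y k * Z \<kappa>2) (Pmono (\<kappa>1 @ k # \<kappa>2) R))"
proof -
  let ?T = "tens3 r m X y Z" and ?S = "{\<kappa>. X \<kappa> \<noteq> 0} \<times> {k. coeff y k \<noteq> 0} \<times> {\<kappa>. Z \<kappa> \<noteq> 0}"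
  let ?glue = "\<lambda>(\<kappa>1, k, \<kappa>2). \<kappa>1 @ k # \<kappa>2"
  have fin: "finite ?S"
    using X Z by (simp add: tens_ok_def finite_coeff_nonzero)
  have supp: "{\<kappa>. ?T \<kappa> \<noteq> 0} \<subseteq> ?glue ` ?S"
  proof
    fix \<kappa> assume "\<kappa> \<in> {\<kappa>. ?T \<kappa> \<noteq> 0}"
    then have "length \<kappa> = r + 1 + m" and "X (take r \<kappa>) * coeff y (\<kappa> ! r) * Z (drop (r + 1) \<kappa>) \<noteq> 0"
      by (auto simp: tens3_def split: if_splits)
    moreover have "\<kappa> = take r \<kappa> @ (\<kappa> ! r) # drop (r + 1) \<kappa>"
      using calculation(1) id_take_nth_drop[of r \<kappa>] by simp
    ultimately show "\<kappa> \<in> ?glue ` ?S"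
      by (auto intro!: image_eqI[where x="(take r \<kappa>, \<kappa> ! r, drop (r + 1) \<kappa>)"])
  qed
  have "tens_ok (r + Suc m) ?T"
    using finite_subset[OF supp] fin by (auto simp: tens_ok_def tens3_def)
  then have "Pmap sc d (Suc (r + Suc m)) ?T R = (\<Sum>\<kappa>\<in>{\<kappa>. ?T \<kappa> \<noteq> 0}. sc (?T \<kappa>) (Pmono \<kappa> R))"
    by (rule Pmap_eq_sum_Pmono[OF R])
  also have "\<dots> = (\<Sum>\<kappa>\<in>?glue ` ?S. sc (?T \<kappa>) (Pmono \<kappa> R))"
    using fin supp by (intro sum.mono_neutral_left) auto
  also have "\<dots> = (\<Sum>(\<kappa>1, k, \<kappa>2)\<in>?S. sc (X \<kappa>1 * coeff y k * Z \<kappa>2) (Pmono (\<kappa>1 @ k # \<kappa>2) R))"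
  proof (subst sum.reindex)
    show "inj_on ?glue ?S"
      using X by (auto simp: inj_on_def append_eq_append_conv tens_ok_def)
  qed (use X Z in \<open>auto simp: tens3_def nth_append tens_ok_def intro!: sum.cong\<close>)
  finally show ?thesis
    by (simp add: sum.cartesian_product)
qed

lemma sum_coeff_mult_monom:
  "(\<Sum>K\<in>{K. coeff (y * monom 1 J) K \<noteq> 0}. sc (coeff (y * monom 1 J) K) (F K)) =
   (\<Sum>k\<in>{k. coeff y k \<noteq> 0}. sc (coeff y k) (F (k + J)))"
proof -
  have coeff: "coeff (y * monom 1 J) K = (if J \<le> K then coeff y (K - J) else 0)" for K
    by (simp add: mult.commute[of y] coeff_monom_mult)
  have "{K. coeff (y * monom 1 J) K \<noteq> 0} = (\<lambda>k. k + J) ` {k. coeff y k \<noteq> 0}"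
    by (force simp: coeff intro: image_eqI[where x="K - J" for K])
  then show ?thesis
    by (simp add: sum.reindex coeff)
qed

lemma Pmap_tens3_EP:
  assumes A: "tens_ok (Suc s) A" and B: "tens_ok (Suc m) B" and X: "tens_ok s X" and Z: "tens_ok m Z"
  shows "Pmap sc d (Suc (s + Suc m)) (tens3 s m X y Z) (EP sc pr (Suc s) (Suc m) A B) =
    (\<Sum>\<kappa>\<in>{\<kappa>. X \<kappa> \<noteq> 0}. \<Sum>j\<in>{j. list_all2 (\<le>) j \<kappa>}.
       sc (X \<kappa> * (\<Prod>i<length \<kappa>. of_nat ((\<kappa> ! i) choose (j ! i))))
          (Pmap sc d 2 (poly1 (y * monom 1 (sum_list j)))
             (pseudo sc pr (Pmap sc d (Suc s) (sing (map2 (-) \<kappa> j) 1) A) (Pmap sc d (Suc m) Z B))))"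
proof -
  let ?C = "\<lambda>\<kappa> j. \<Prod>i<length \<kappa>. (of_nat ((\<kappa> ! i) choose (j ! i)) :: 'k)"
  let ?t = "\<lambda>\<kappa> j k \<kappa>2. sc (X \<kappa> * ?C \<kappa> j * coeff y k * Z \<kappa>2)
    (pr (k + sum_list j) (Pmono (map2 (-) \<kappa> j) A) (Pmono \<kappa>2 B))"
  have lhs: "sc (X \<kappa> * coeff y k * Z \<kappa>2) (Pmono (\<kappa> @ k # \<kappa>2) (EP sc pr (Suc s) (Suc m) A B)) =
      (\<Sum>j\<in>{j. list_all2 (\<le>) j \<kappa>}. ?t \<kappa> j k \<kappa>2)" if "X \<kappa> \<noteq> 0" "Z \<kappa>2 \<noteq> 0" for \<kappa> k \<kappa>2
    using that X Z by (simp add: Pmono_EP[OF A B] tens_ok_def scale_sum_right mult_ac)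
  have rhs: "sc (X \<kappa> * ?C \<kappa> j) (Pmap sc d 2 (poly1 (y * monom 1 (sum_list j)))
      (pseudo sc pr (Pmap sc d (Suc s) (sing (map2 (-) \<kappa> j) 1) A) (Pmap sc d (Suc m) Z B))) =
      (\<Sum>k\<in>{k. coeff y k \<noteq> 0}. \<Sum>\<kappa>2\<in>{\<kappa>. Z \<kappa> \<noteq> 0}. ?t \<kappa> j k \<kappa>2)"
    if "X \<kappa> \<noteq> 0" "list_all2 (\<le>) j \<kappa>" for \<kappa> j
  proof -
    have "length (map2 (-) \<kappa> j) = s"
      using that X by (simp add: tens_ok_def list_all2_lengthD)
    then show ?thesis
      using Pmap_sing_eq_Pmono[of "map2 (-) \<kappa> j" A] A unfolding Pmap_pseudo sum_coeff_mult_monom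
      by (simp add: Pmap_eq_sum_Pmono[OF B Z] pr_sum_right pr_scale_right scale_sum_right mult_ac)
  qed
  have "Pmap sc d (Suc (s + Suc m)) (tens3 s m X y Z) (EP sc pr (Suc s) (Suc m) A B) =
      (\<Sum>\<kappa>\<in>{\<kappa>. X \<kappa> \<noteq> 0}. \<Sum>k\<in>{k. coeff y k \<noteq> 0}. \<Sum>\<kappa>2\<in>{\<kappa>. Z \<kappa> \<noteq> 0}.
        \<Sum>j\<in>{j. list_all2 (\<le>) j \<kappa>}. ?t \<kappa> j k \<kappa>2)"
  proof -
    have EP: "tens_ok (Suc (s + Suc m)) (EP sc pr (Suc s) (Suc m) A B)"
      using tens_ok_EP[OF A B] by simp
    show ?thesis
      unfolding Pmap_tens3[OF EP X Z] by (intro sum.cong refl lhs) auto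
  qed
  also have "\<dots> = (\<Sum>\<kappa>\<in>{\<kappa>. X \<kappa> \<noteq> 0}. \<Sum>j\<in>{j. list_all2 (\<le>) j \<kappa>}.
      \<Sum>k\<in>{k. coeff y k \<noteq> 0}. \<Sum>\<kappa>2\<in>{\<kappa>. Z \<kappa> \<noteq> 0}. ?t \<kappa> j k \<kappa>2)"
    by (intro sum.cong refl, subst sum.swap, subst (2) sum.swap) (rule refl)
  also have "\<dots> = (\<Sum>\<kappa>\<in>{\<kappa>. X \<kappa> \<noteq> 0}. \<Sum>j\<in>{j. list_all2 (\<le>) j \<kappa>}.
       sc (X \<kappa> * ?C \<kappa> j) (Pmap sc d 2 (poly1 (y * monom 1 (sum_list j)))
         (pseudo sc pr (Pmap sc d (Suc s) (sing (map2 (-) \<kappa> j) 1) A) (Pmap sc d (Suc m) Z B))))"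
    by (intro sum.cong refl rhs[symmetric]) auto
  finally show ?thesis .
qed

end

theorem lemma3p0:
  fixes sc :: "'k::field_char_0 \<Rightarrow> 'c::ab_group_add \<Rightarrow> 'c"
    and d :: "'c \<Rightarrow> 'c" and pr :: "nat \<Rightarrow> 'c \<Rightarrow> 'c \<Rightarrow> 'c"
    and n s :: nat and A B :: "nat list \<Rightarrow> 'c"
    and X Z :: "nat list \<Rightarrow> 'k" and y :: "'k poly"
  assumes "conformal_algebra sc d pr"
    and "1 \<le> s" and "s \<le> n - 1"
    and "tens_ok s A" and "tens_ok (n - s) B"
    and "tens_ok (s - 1) X" and "tens_ok (n - s - 1) Z"
  shows "Pmap sc d n (tens3 (s - 1) (n - s - 1) X y Z) (EP sc pr s (n - s) A B) =
    (\<Sum>\<kappa>\<in>{\<kappa>. X \<kappa> \<noteq> 0}. \<Sum>j\<in>{j. list_all2 (\<le>) j \<kappa>}.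
       sc (X \<kappa> * (\<Prod>i<length \<kappa>. of_nat ((\<kappa> ! i) choose (j ! i))))
          (Pmap sc d 2 (poly1 (y * monom 1 (sum_list j)))
             (pseudo sc pr (Pmap sc d s (sing (map2 (-) \<kappa> j) 1) A)
                           (Pmap sc d (n - s) Z B))))"
proof -
  interpret conformal_alg sc d pr
    by (rule conformal_alg.intro) (fact assms(1))
  obtain s' where s: "s = Suc s'"
    using assms(2) by (cases s) auto
  obtain m' where "n - s = Suc m'"
    using assms(2,3) by (cases "n - s") auto
  then have n: "n = Suc (s' + Suc m')"
    using s by simp
  show ?thesis
    using Pmap_tens3_EP[of s' A m' B X Z y] assms(4-7) by (simp add: s n)
qed

end
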